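(* Assume the standing hypotheses (H). (a) Let $0\le K\in L^4_{\mathfrak P}$. There is a nonnegative $K_1\in L^1_{\mathfrak P}$ (depending on $K$) such that for every $(t,\mathbf x)\in\mathbf D$, $\boldsymbol\zeta\in\mathbf Z(t,\mathbf x)$ and $\psi\in(0,1)$ with $\|\boldsymbol\zeta-\boldsymbol\zeta^0(\Sigma)\|\le K(t,\mathbf x)\psi$, we have $H^\psi_1(t,\mathbf x;\boldsymbol\zeta)\ge-\frac12\widetilde g(t,\mathbf x)\psi-K_1(t,\mathbf x)\psi^2$. (b) Let $0\le\bar K\in L^4_{\mathfrak P}$. There is a nonnegative $K_1\in L^2_{\mathfrak P}$ (depending on $\bar K$) such that for every $(t,\mathbf x)\in\mathbf D$, $\boldsymbol\zeta\in\mathbf Z$ and $\psi\in(0,1)$ with $\|\boldsymbol\zeta-\boldsymbol\zeta^\psi(t,\mathbf x)\|\le\bar K(t,\mathbf x)\psi^2$, we have $H^\psi_1(t,\mathbf x;\boldsymbol\zeta)\le-\frac12\widetilde g(t,\mathbf x)\mathbf 1_{\{\Sigma\in(\underline\Sigma,\overline\Sigma)\}}\psi+K_1(t,\mathbf x)\psi^2$.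
   Context: Setting. Fix $T>0$, $S_0>0$, $\Sigma_0>0$, $A_0\in\mathbb R$. Let $\Omega$ be the set of continuous paths $\omega=(\omega^S,\omega^\Sigma,\omega^A):[0,T]\to\mathbb R^3$ with $\omega_0=(S_0,\Sigma_0,A_0)$, with the uniform topology and Borel $\sigma$-algebra $\mathcal F$; $S,\Sigma,A$ are the coordinate processes, $\mathbb F$ their raw filtration (all filtration notions refer to it), $M_t=\sup_{u\le t}S_u$, $\mathbf X_t=(S_t,A_t,M_t,\Sigma_t)$. $\mathbf G=\mathbb R_+\times\mathbb R\times\mathbb R_+$, $\mathbf D^0=(0,T)\times\mathbf G\times\mathbb R_+$ (points $(t,\mathbf x)$, $\mathbf x=(S,A,M,\Sigma)$); fix $0<\underline\Sigma<\Sigma_0<\overline\Sigma$, $\mathbf D=(0,T)\times\mathbf G\times[\underline\Sigma,\overline\Sigma]$. $\|\cdot\|$ Euclidean norm, $\|\cdot\|_F$ Frobenius norm, $\mathbf e_4$ fourth unit vector, $x^-=\max(-x,0)$. Call: maturity $T_{\mathsf C}$, payoff $\mathsf C$; $\mathcal C(t,S,\Sigma)$ satisfies $\mathcal C_t+\frac12\Sigma^2S^2\mathcal C_{SS}=0$, $\mathcal C(T_{\mathsf C},S,\Sigma)=\mathsf C(S)$. $b^{\mathcal C}(t,\mathbf x;\boldsymbol\zeta)=\nu\mathcal C_\Sigma+\frac12S^2\mathcal C_{SS}(\sigma^2-\Sigma^2)+\sigma\eta S\mathcal C_{S\Sigma}+\frac12(\eta^2+\xi)\mathcal C_{\Sigma\Sigma}$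 for $\boldsymbol\zeta=(\nu,\sigma,\eta,\xi)$. Models: $\mathfrak P^{00}$ = probability measures $P$ on $(\Omega,\mathcal F)$ with progressively measurable control $\boldsymbol\zeta^P=(\nu^P,\sigma^P,\eta^P,\xi^P)$ such that $S$ and $\Sigma-\int_0^\cdot\nu^P_tdt$ are continuous local $P$-martingales with $d\langle S\rangle_t=S_t^2(\sigma^P_t)^2dt$, $d\langle\Sigma\rangle_t=((\eta^P_t)^2+\xi^P_t)dt$, $d\langle S,\Sigma\rangle_t=S_t\sigma^P_t\eta^P_tdt$, $S,\Sigma>0$ a.s., $\xi^P\ge0$, $b^{\mathcal C}(t,\mathbf X_t;\boldsymbol\zeta^P_t)=0$ $dt\times P$-a.e. Given Borel $\alpha,\beta,\gamma,\delta:[0,T]\times\mathbb R^3\to\mathbb R$, $\mathfrak P^0$ = those $P\in\mathfrak P^{00}$ with $dA_t=(\alpha+\frac12(\sigma^P_t)^2\beta)dt+\gamma dS_t+\delta dM_t$ (coefficients at $(t,S_t,A_t,M_t)$). $\boldsymbol\zeta^0(\Sigma)=(0,\Sigma,0,0)^\top$; reference model: $\boldsymbol\zeta^P_t=\boldsymbol\zeta^0(\Sigma_t)$ $dt\times P$-a.e. Non-traded option: $\mathcal V(\cdot,\Sigma)$ solves $\mathcal V_t+(\alpha+\frac12\beta\Sigma^2)\mathcal V_A+\frac12\Sigma^2S^2(\mathcal V_{SS}+2\gamma\mathcal V_{SA}+\gamma^2\mathcal V_{AA})=0$ on $(0,T)\times\mathbf G$, $\delta\mathcal V_A+\mathcal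 V_M=0$ on $\{S\ge M\}$, $\mathcal V(T,\cdot,\Sigma)=\mathsf V$. $\Delta=\mathcal V_S+\gamma\mathcal V_A$, $\Gamma=\mathcal V_{SS}+2\gamma\mathcal V_{SA}+\gamma^2\mathcal V_{AA}$, $\frac{\partial\Delta}{\partial\Sigma}:=\mathcal V_{S\Sigma}+\gamma\mathcal V_{A\Sigma}$. P&L: $V_t=\mathcal V(t,\mathbf X_t)$, $C_t=\mathcal C(t,S_t,\Sigma_t)$; trading strategies $\boldsymbol\upsilon=(\theta,\phi)$ (real locally bounded progressively measurable); $Y^{\boldsymbol\upsilon,P}_t=Y_0+V_0+\int_0^t\theta dS+\int_0^t\phi dC-V_t$ for fixed $Y_0\in\mathbb R$. Preferences: $\Psi=\mathrm{diag}(\psi_\nu,\psi_\sigma,\psi_\eta,\psi_\xi)$ with positive entries, $\psi_{\min},\psi_{\max}$ their min and max, $f(\Sigma,\boldsymbol\zeta)=\frac12(\boldsymbol\zeta-\boldsymbol\zeta^0(\Sigma))^\top\Psi^{-1}(\boldsymbol\zeta-\boldsymbol\zeta^0(\Sigma))$; a utility $U$, a set $\mathfrak Y$ of strategies and $\mathfrak P\subset\mathfrak P^0$; $J^\psi(\boldsymbol\upsilon,P)=E^P[U(Y^{\boldsymbol\upsilon,P}_T)+\frac1\psi\int_0^TU'(Y^{\boldsymbol\upsilon,P}_t)f(\Sigma_t,\boldsymbol\zeta^P_t)dt]$. Candidate control: $\mathbf c=(\mathcal C_\Sigma,\Sigma S^2\mathcal C_{SS},\Sigma S\mathcal C_{S\Sigma},\frac12\mathcal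 C_{\Sigma\Sigma})^\top$, $\mathbf v=(\mathcal V_\Sigma,\Sigma(\beta\mathcal V_A+S^2\Gamma),\Sigma S\frac{\partial\Delta}{\partial\Sigma},\frac12\mathcal V_{\Sigma\Sigma})^\top$; $\lambda=\frac{\mathbf c^\top\Psi\mathbf v}{\mathbf c^\top\Psi\mathbf c}$ if $\mathcal V_{\Sigma\Sigma}-\frac{\mathbf c^\top\Psi\mathbf v}{\mathbf c^\top\Psi\mathbf c}\mathcal C_{\Sigma\Sigma}\ge0$, else $\lambda=\frac{\mathbf c^\top\Psi\mathbf v-\frac14\mathcal C_{\Sigma\Sigma}\mathcal V_{\Sigma\Sigma}\psi_\xi}{\mathbf c^\top\Psi\mathbf c-\frac14\mathcal C_{\Sigma\Sigma}^2\psi_\xi}$; $\mu=\frac12(\mathcal V_{\Sigma\Sigma}-\lambda\mathcal C_{\Sigma\Sigma})^-$; $\widetilde{\boldsymbol\zeta}=\Psi(\mathbf v-\lambda\mathbf c+\mu\mathbf e_4)$; $\boldsymbol\zeta^\psi=\boldsymbol\zeta^0(\Sigma)+\widetilde{\boldsymbol\zeta}\mathbf 1_{\{\underline\Sigma<\Sigma<\overline\Sigma\}}\psi$; $\widetilde g=\mathbf v^\top\widetilde{\boldsymbol\zeta}$. Cash-equivalent PDE: for each $\Sigma\in[\underline\Sigma,\overline\Sigma]$, $\widetilde w_t+(\alpha+\frac12\beta\Sigma^2)\widetilde w_A+\frac12\Sigma^2S^2(\widetilde w_{SS}+2\gamma\widetilde w_{SA}+\gamma^2\widetilde w_{AA})+\frac12\widetilde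 g(\cdot,\Sigma)=0$ on $(0,T)\times\mathbf G$, $\delta\widetilde w_A+\widetilde w_M=0$ on $\{S\ge M\}$, $\widetilde w(T,\cdot,\Sigma)=0$. $L^p_{\mathfrak P}$: Borel $K:\mathbf D^0\to\mathbb R$ with $\sup_{P\in\mathfrak P}E^P[\int_0^T|K(t,\mathbf X_t)|^pdt]^{1/p}<\infty$. Candidate asymptotic model family: $(P^\psi)_{\psi\in(0,\psi_0)}\subset\mathfrak P$, $\psi_0\in(0,1)$, with $K_0\in L^4_{\mathfrak P}$ such that $\|\boldsymbol\zeta^{P^\psi}_t-\boldsymbol\zeta^\psi(t,\mathbf X_t)\|\le K_0(t,\mathbf X_t)\psi^2$ $dt\times P^\psi$-a.e. Assumption (A): (a) $\exists K_{\mathfrak Y}>0$ with $Y^{\boldsymbol\upsilon,P}>-K_{\mathfrak Y}$ $dt\times P$-a.e. for all $\boldsymbol\upsilon\in\mathfrak Y$, $P\in\mathfrak P$; (b) $\mathfrak P$ contains a candidate asymptotic model family and a reference model, and constants $\underline\nu<0<\overline\nu$, $0<\underline\sigma<\underline\Sigma$, $\overline\Sigma<\overline\sigma$, $\underline\eta<0<\overline\eta$, $\overline\xi>0$ exist with $\nu^P\in[\underline\nu,\overline\nu]$, $\sigma^P\in[\underline\sigma,\overline\sigma]$, $\eta^P\in[\underline\eta,\overline\eta]$, $\xi^P\in[0,\overline\xi]$, $\Sigma\in[\underline\Sigma,\overline\Sigma]$ $dt\times P$-a.e. for all $P\in\mathfrak P$; (c) $T_{\mathsf C}\ge T$, $\mathcal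 C\in C^{1,2,2}((0,T_{\mathsf C})\times\mathbb R_+^2)\cap C([0,T_{\mathsf C}]\times\overline{\mathbb R}_+^2)$ solves the call PDE classically for $\Sigma\in[\underline\Sigma,\overline\Sigma]$, and $\mathcal C_\Sigma\ne0$, $|\mathcal C_{\Sigma\Sigma}|\le K_{\mathcal C}(|\mathcal C_\Sigma|+|S^2\mathcal C_{SS}|+|S\mathcal C_{S\Sigma}|)$ on $(0,T)\times\mathbb R_+\times[\underline\Sigma,\overline\Sigma]$, $K_{\mathcal C}\in L^2_{\mathfrak P}$; (d) $\mathcal V\in C^{1,2,2,1,2}(\mathbf D^0)\cap C(\overline{\mathbf D^0})$ solves the $\mathcal V$-PDE classically for $\Sigma\in[\underline\Sigma,\overline\Sigma]$ and $|\mathcal V_\Sigma|,|\beta\mathcal V_A+S^2\Gamma|,|S\frac{\partial\Delta}{\partial\Sigma}|,|\mathcal V_{\Sigma\Sigma}|\le K_{\mathcal V}$ on $\mathbf D$; (e) $\widetilde w\in C^{1,2,2,1,2}(\mathbf D^0)\cap C(\overline{\mathbf D^0})$ solves the cash-equivalent PDE classically for $\Sigma\in[\underline\Sigma,\overline\Sigma]$, $0\le\widetilde w\le K_{\widetilde w}$ on $\mathbf D$, and $\widetilde w_\Sigma$, $S(\widetilde w_S+\gamma\widetilde w_A)$, $\beta\widetilde w_A+S^2(\widetilde w_{SS}+2\gamma\widetilde w_{SA}+\gamma^2\widetilde w_{AA})$, $S(\widetilde w_{S\Sigma}+\gamma\widetilde w_{A\Sigma})$, $\widetilde w_{\Sigma\Sigma}\in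 L^4_{\mathfrak P}$; (f) $U\in C^3(\mathbb R)$, $U'>0$, $U''<0$, $-U''/U'$ nonincreasing. Additional notation. $\mathbf Z^0=\mathbb R^3\times[0,\infty)$; $\mathbf Z=[\underline\nu,\overline\nu]\times[\underline\sigma,\overline\sigma]\times[\underline\eta,\overline\eta]\times[0,\overline\xi]$; for $(t,\mathbf x)\in\mathbf D$: $\mathbf Z^0(t,\mathbf x)=\{\boldsymbol\zeta\in\mathbf Z^0:b^{\mathcal C}(t,\mathbf x;\boldsymbol\zeta)=0\}$, $\mathbf Z(t,\mathbf x)=\mathbf Z^0(t,\mathbf x)\cap\mathbf Z$. $\boldsymbol\upsilon^\star(t,\mathbf x)=(\Delta-\frac{\mathcal V_\Sigma}{\mathcal C_\Sigma}\mathcal C_S,\frac{\mathcal V_\Sigma}{\mathcal C_\Sigma})$, delta-vega hedge $\boldsymbol\upsilon^\star_t=\boldsymbol\upsilon^\star(t,\mathbf X_t)$. $H^\psi_1(t,\mathbf x;\boldsymbol\zeta)=\frac1{2\psi}(\boldsymbol\zeta-\boldsymbol\zeta^0(\Sigma))^\top\Psi^{-1}(\boldsymbol\zeta-\boldsymbol\zeta^0(\Sigma))-\mathbf v(t,\mathbf x)^\top(\boldsymbol\zeta-\boldsymbol\zeta^0(\Sigma))$. Standing hypotheses (H): Assumption (A) holds, $\boldsymbol\upsilon^\star\in\mathfrak Y$, and $(P^\psi)_{\psi\in(0,\psi_0)}\subset\mathfrak P$ is a candidate asymptotic model family. *)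

theory Defs
  imports "HOL-Probability.Probability"
begin

(* Points of \<real>^4 are nested pairs; the norm of the product type is the Euclidean norm.
  A state point is x = (S, A, M, \<Sigma>); a control is \<zeta> = (\<nu>, \<sigma>, \<eta>, \<xi>). *)

type_synonym real4 = "real \<times> real \<times> real \<times> real"

definition c1 :: "real4 \<Rightarrow> real" where "c1 z = fst z"
definition c2 :: "real4 \<Rightarrow> real" where "c2 z = fst (snd z)"
definition c3 :: "real4 \<Rightarrow> real" where "c3 z = fst (snd (snd z))"
definition c4 :: "real4 \<Rightarrow> real" where "c4 z = snd (snd (snd z))"

abbreviation xS :: "real4 \<Rightarrow> real" where "xS \<equiv> c1"
abbreviation xA :: "real4 \<Rightarrow> real" where "xA \<equiv> c2"
abbreviation xM :: "real4 \<Rightarrow> real" where "xM \<equiv> c3"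
abbreviation xSig :: "real4 \<Rightarrow> real" where "xSig \<equiv> c4"

definition comp4 :: "nat \<Rightarrow> real4 \<Rightarrow> real" where
  "comp4 i z = (if i = 1 then c1 z else if i = 2 then c2 z else if i = 3 then c3 z else c4 z)"
definition upd4 :: "nat \<Rightarrow> real \<Rightarrow> real4 \<Rightarrow> real4" where
  "upd4 i u z = (if i = 1 then u else c1 z, if i = 2 then u else c2 z,
                 if i = 3 then u else c3 z, if i = 4 then u else c4 z)"

definition wdot :: "real4 \<Rightarrow> real4 \<Rightarrow> real4 \<Rightarrow> real" where
  "wdot w a b = c1 w * c1 a * c1 b + c2 w * c2 a * c2 b + c3 w * c3 a * c3 b + c4 w * c4 a * c4 b"
definition dot4 :: "real4 \<Rightarrow> real4 \<Rightarrow> real" where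
  "dot4 a b = c1 a * c1 b + c2 a * c2 b + c3 a * c3 b + c4 a * c4 b"
definition inv4 :: "real4 \<Rightarrow> real4" where
  "inv4 w = (1 / c1 w, 1 / c2 w, 1 / c3 w, 1 / c4 w)"

definition negpart :: "real \<Rightarrow> real" where "negpart x = max (- x) 0"

definition Cdt :: "(real \<Rightarrow> real \<Rightarrow> real \<Rightarrow> real) \<Rightarrow> real \<Rightarrow> real \<Rightarrow> real \<Rightarrow> real" where
  "Cdt f t S s = deriv (\<lambda>u. f u S s) t"
definition CdS :: "(real \<Rightarrow> real \<Rightarrow> real \<Rightarrow> real) \<Rightarrow> real \<Rightarrow> real \<Rightarrow> real \<Rightarrow> real" where
  "CdS f t S s = deriv (\<lambda>u. f t u s) S"
definition CdSig :: "(real \<Rightarrow> real \<Rightarrow> real \<Rightarrow> real) \<Rightarrow> real \<Rightarrow> real \<Rightarrow> real \<Rightarrow> real" where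
  "CdSig f t S s = deriv (\<lambda>u. f t S u) s"

(* \<V>(t,x) with x = (S,A,M,\<Sigma>): partial in t, and partial in coordinate i
  (1 = S, 2 = A, 3 = M, 4 = \<Sigma>). *)
definition Vdt :: "(real \<Rightarrow> real4 \<Rightarrow> real) \<Rightarrow> real \<Rightarrow> real4 \<Rightarrow> real" where
  "Vdt f t x = deriv (\<lambda>u. f u x) t"
definition Vdx :: "nat \<Rightarrow> (real \<Rightarrow> real4 \<Rightarrow> real) \<Rightarrow> real \<Rightarrow> real4 \<Rightarrow> real" where
  "Vdx i f t x = deriv (\<lambda>u. f t (upd4 i u x)) (comp4 i x)"

definition C122_on :: "(real \<times> real \<times> real) set \<Rightarrow> (real \<Rightarrow> real \<Rightarrow> real \<Rightarrow> real) \<Rightarrow> bool" where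
  "C122_on U f \<longleftrightarrow>
    (\<forall>(t,S,s)\<in>U.
       (\<lambda>u. f u S s) differentiable (at t) \<and> (\<lambda>u. f t u s) differentiable (at S) \<and>
       (\<lambda>u. f t S u) differentiable (at s) \<and>
       (\<lambda>u. CdS f t u s) differentiable (at S) \<and> (\<lambda>u. CdS f t S u) differentiable (at s) \<and>
       (\<lambda>u. CdSig f t u s) differentiable (at S) \<and> (\<lambda>u. CdSig f t S u) differentiable (at s)) \<and>
    (\<forall>g\<in>{f, Cdt f, CdS f, CdSig f, CdS (CdS f), CdSig (CdS f), CdS (CdSig f), CdSig (CdSig f)}.
       continuous_on U (\<lambda>(t,S,s). g t S s))"

definition C12212_on :: "(real \<times> real4) set \<Rightarrow> (real \<Rightarrow> real4 \<Rightarrow> real) \<Rightarrow> bool" where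
  "C12212_on U f \<longleftrightarrow>
    (\<forall>(t,x)\<in>U.
       (\<lambda>u. f u x) differentiable (at t) \<and>
       (\<forall>i\<in>{1,2,3,4}. (\<lambda>u. f t (upd4 i u x)) differentiable (at (comp4 i x))) \<and>
       (\<forall>i\<in>{1,2,4}. \<forall>j\<in>{1,2,4}. (\<lambda>u. Vdx i f t (upd4 j u x)) differentiable (at (comp4 j x)))) \<and>
    continuous_on U (\<lambda>(t,x). f t x) \<and> continuous_on U (\<lambda>(t,x). Vdt f t x) \<and>
    (\<forall>i\<in>{1,2,3,4}. continuous_on U (\<lambda>(t,x). Vdx i f t x)) \<and>
    (\<forall>i\<in>{1,2,4}. \<forall>j\<in>{1,2,4}. continuous_on U (\<lambda>(t,x). Vdx j (Vdx i f) t x))"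

definition C3 :: "(real \<Rightarrow> real) \<Rightarrow> bool" where
  "C3 U \<longleftrightarrow> (\<forall>y. U differentiable (at y) \<and> deriv U differentiable (at y) \<and>
                 deriv (deriv U) differentiable (at y)) \<and> continuous_on UNIV (deriv (deriv (deriv U)))"

definition D0 :: "real \<Rightarrow> (real \<times> real4) set" where
  "D0 T = {(t,x). 0 < t \<and> t < T \<and> xS x > 0 \<and> xM x > 0 \<and> xSig x > 0}"

definition D :: "real \<Rightarrow> real \<Rightarrow> real \<Rightarrow> (real \<times> real4) set" where
  "D T Slo Shi = {(t,x). 0 < t \<and> t < T \<and> xS x > 0 \<and> xM x > 0 \<and> Slo \<le> xSig x \<and> xSig x \<le> Shi}"

definition D0cl :: "real \<Rightarrow> (real \<times> real4) set" where
  "D0cl T = {(t,x). 0 \<le> t \<and> t \<le> T \<and> xS x \<ge> 0 \<and> xM x \<ge> 0 \<and> xSig x \<ge> 0}"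

(* A path \<omega> = (\<omega>^S, \<omega>^\<Sigma>, \<omega>^A) on [0,T], extended constantly outside [0,T]. *)
type_synonym path = "real \<Rightarrow> real \<times> real \<times> real"

definition Omega :: "real \<Rightarrow> real \<Rightarrow> real \<Rightarrow> real \<Rightarrow> path set" where
  "Omega T S0 Sig0 A0 = {\<omega>. continuous_on {0..T} \<omega> \<and> \<omega> 0 = (S0, Sig0, A0) \<and>
                             (\<forall>u. \<omega> u = \<omega> (min T (max 0 u)))}"

definition pS :: "path \<Rightarrow> real \<Rightarrow> real" where "pS \<omega> t = fst (\<omega> t)"
definition pSig :: "path \<Rightarrow> real \<Rightarrow> real" where "pSig \<omega> t = fst (snd (\<omega> t))"
definition pA :: "path \<Rightarrow> real \<Rightarrow> real" where "pA \<omega> t = snd (snd (\<omega> t))"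
definition pM :: "path \<Rightarrow> real \<Rightarrow> real" where "pM \<omega> t = Sup ((\<lambda>u. pS \<omega> u) ` {0..t})"

definition Xp :: "path \<Rightarrow> real \<Rightarrow> real4" where
  "Xp \<omega> t = (pS \<omega> t, pA \<omega> t, pM \<omega> t, pSig \<omega> t)"

definition evalsets :: "path set \<Rightarrow> real set \<Rightarrow> path set set" where
  "evalsets \<Omega> I = {(\<lambda>\<omega>. \<omega> u) -` B \<inter> \<Omega> | u B. u \<in> I \<and> B \<in> sets borel}"

(* \<F> = Borel \<sigma>-algebra of the uniform topology = \<sigma>(coordinates); raw filtration \<F>_t. *)
definition Fsets :: "real \<Rightarrow> path set \<Rightarrow> path set set" where
  "Fsets T \<Omega> = sigma_sets \<Omega> (evalsets \<Omega> {0..T})"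
definition Ft :: "path set \<Rightarrow> real \<Rightarrow> path measure" where
  "Ft \<Omega> t = sigma \<Omega> (evalsets \<Omega> {0..t})"

definition prog_meas :: "real \<Rightarrow> path set \<Rightarrow> (real \<Rightarrow> path \<Rightarrow> 'b::topological_space) \<Rightarrow> bool" where
  "prog_meas T \<Omega> Z \<longleftrightarrow> (\<forall>t\<in>{0..T}.
      (\<lambda>(u,\<omega>). Z u \<omega>) \<in> borel_measurable (restrict_space borel {0..t} \<Otimes>\<^sub>M Ft \<Omega> t))"

definition AE_dtP :: "real \<Rightarrow> path measure \<Rightarrow> (real \<Rightarrow> path \<Rightarrow> bool) \<Rightarrow> bool" where
  "AE_dtP T P Q \<longleftrightarrow> (AE z in (restrict_space lborel {0..T} \<Otimes>\<^sub>M P). Q (fst z) (snd z))"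

definition Lp :: "real \<Rightarrow> path measure set \<Rightarrow> nat \<Rightarrow> (real \<Rightarrow> real4 \<Rightarrow> real) \<Rightarrow> bool" where
  "Lp T PP p K \<longleftrightarrow> set_borel_measurable borel (D0 T) (\<lambda>(t,x). K t x) \<and>
     (\<exists>B::real. \<forall>P\<in>PP.
        (\<integral>\<^sup>+\<omega>. (\<integral>\<^sup>+t. indicator {0..T} t * ennreal (\<bar>K t (Xp \<omega> t)\<bar> ^ p) \<partial>lborel) \<partial>P) \<le> ennreal B)"

definition zeta0 :: "real \<Rightarrow> real4" where "zeta0 s = (0, s, 0, 0)"

definition bC :: "(real \<Rightarrow> real \<Rightarrow> real \<Rightarrow> real) \<Rightarrow> real \<Rightarrow> real4 \<Rightarrow> real4 \<Rightarrow> real" where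
  "bC C t x z = (let S = xS x; s = xSig x in
      c1 z * CdSig C t S s + 1/2 * S^2 * CdS (CdS C) t S s * ((c2 z)^2 - s^2)
      + c2 z * c3 z * S * CdSig (CdS C) t S s + 1/2 * ((c3 z)^2 + c4 z) * CdSig (CdSig C) t S s)"

definition Z0 :: "(real \<Rightarrow> real \<Rightarrow> real \<Rightarrow> real) \<Rightarrow> real \<Rightarrow> real4 \<Rightarrow> real4 set" where
  "Z0 C t x = {z. c4 z \<ge> 0 \<and> bC C t x z = 0}"
definition Zbox :: "real4 \<Rightarrow> real4 \<Rightarrow> real4 set" where
  "Zbox lo hi = {z. c1 lo \<le> c1 z \<and> c1 z \<le> c1 hi \<and> c2 lo \<le> c2 z \<and> c2 z \<le> c2 hi \<and>
                    c3 lo \<le> c3 z \<and> c3 z \<le> c3 hi \<and> 0 \<le> c4 z \<and> c4 z \<le> c4 hi}"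

definition gam_at :: "(real \<Rightarrow> real \<Rightarrow> real \<Rightarrow> real \<Rightarrow> real) \<Rightarrow> real \<Rightarrow> real4 \<Rightarrow> real" where
  "gam_at g t x = g t (xS x) (xA x) (xM x)"

definition Gam :: "(real \<Rightarrow> real \<Rightarrow> real \<Rightarrow> real \<Rightarrow> real) \<Rightarrow> (real \<Rightarrow> real4 \<Rightarrow> real) \<Rightarrow> real \<Rightarrow> real4 \<Rightarrow> real" where
  "Gam \<gamma> V t x = Vdx 1 (Vdx 1 V) t x + 2 * gam_at \<gamma> t x * Vdx 2 (Vdx 1 V) t x
                 + (gam_at \<gamma> t x)^2 * Vdx 2 (Vdx 2 V) t x"
definition Del :: "(real \<Rightarrow> real \<Rightarrow> real \<Rightarrow> real \<Rightarrow> real) \<Rightarrow> (real \<Rightarrow> real4 \<Rightarrow> real) \<Rightarrow> real \<Rightarrow> real4 \<Rightarrow> real" where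
  "Del \<gamma> V t x = Vdx 1 V t x + gam_at \<gamma> t x * Vdx 2 V t x"
definition dDel_dSig :: "(real \<Rightarrow> real \<Rightarrow> real \<Rightarrow> real \<Rightarrow> real) \<Rightarrow> (real \<Rightarrow> real4 \<Rightarrow> real) \<Rightarrow> real \<Rightarrow> real4 \<Rightarrow> real" where
  "dDel_dSig \<gamma> V t x = Vdx 4 (Vdx 1 V) t x + gam_at \<gamma> t x * Vdx 4 (Vdx 2 V) t x"

definition Lop :: "(real \<Rightarrow> real \<Rightarrow> real \<Rightarrow> real \<Rightarrow> real) \<Rightarrow> (real \<Rightarrow> real \<Rightarrow> real \<Rightarrow> real \<Rightarrow> real) \<Rightarrow>
     (real \<Rightarrow> real \<Rightarrow> real \<Rightarrow> real \<Rightarrow> real) \<Rightarrow> (real \<Rightarrow> real4 \<Rightarrow> real) \<Rightarrow> real \<Rightarrow> real4 \<Rightarrow> real" where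
  "Lop \<alpha> \<beta> \<gamma> w t x = Vdt w t x + (gam_at \<alpha> t x + 1/2 * gam_at \<beta> t x * (xSig x)^2) * Vdx 2 w t x
      + 1/2 * (xSig x)^2 * (xS x)^2 * Gam \<gamma> w t x"

definition cvec :: "(real \<Rightarrow> real \<Rightarrow> real \<Rightarrow> real) \<Rightarrow> real \<Rightarrow> real4 \<Rightarrow> real4" where
  "cvec C t x = (let S = xS x; s = xSig x in
     (CdSig C t S s, s * S^2 * CdS (CdS C) t S s, s * S * CdSig (CdS C) t S s, 1/2 * CdSig (CdSig C) t S s))"

definition vvec :: "(real \<Rightarrow> real \<Rightarrow> real \<Rightarrow> real \<Rightarrow> real) \<Rightarrow> (real \<Rightarrow> real \<Rightarrow> real \<Rightarrow> real \<Rightarrow> real) \<Rightarrow>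
     (real \<Rightarrow> real4 \<Rightarrow> real) \<Rightarrow> real \<Rightarrow> real4 \<Rightarrow> real4" where
  "vvec \<beta> \<gamma> V t x = (let S = xS x; s = xSig x in
     (Vdx 4 V t x, s * (gam_at \<beta> t x * Vdx 2 V t x + S^2 * Gam \<gamma> V t x),
      s * S * dDel_dSig \<gamma> V t x, 1/2 * Vdx 4 (Vdx 4 V) t x))"

definition lam :: "real4 \<Rightarrow> (real \<Rightarrow> real \<Rightarrow> real \<Rightarrow> real) \<Rightarrow> (real \<Rightarrow> real \<Rightarrow> real \<Rightarrow> real \<Rightarrow> real) \<Rightarrow>
     (real \<Rightarrow> real \<Rightarrow> real \<Rightarrow> real \<Rightarrow> real) \<Rightarrow> (real \<Rightarrow> real4 \<Rightarrow> real) \<Rightarrow> real \<Rightarrow> real4 \<Rightarrow> real" where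
  "lam Psi C \<beta> \<gamma> V t x = (let c = cvec C t x; v = vvec \<beta> \<gamma> V t x;
       CSS = CdSig (CdSig C) t (xS x) (xSig x); VSS = Vdx 4 (Vdx 4 V) t x;
       l0 = wdot Psi c v / wdot Psi c c in
     if VSS - l0 * CSS \<ge> 0 then l0
     else (wdot Psi c v - 1/4 * CSS * VSS * c4 Psi) / (wdot Psi c c - 1/4 * CSS^2 * c4 Psi))"

definition mu :: "real4 \<Rightarrow> (real \<Rightarrow> real \<Rightarrow> real \<Rightarrow> real) \<Rightarrow> (real \<Rightarrow> real \<Rightarrow> real \<Rightarrow> real \<Rightarrow> real) \<Rightarrow>
     (real \<Rightarrow> real \<Rightarrow> real \<Rightarrow> real \<Rightarrow> real) \<Rightarrow> (real \<Rightarrow> real4 \<Rightarrow> real) \<Rightarrow> real \<Rightarrow> real4 \<Rightarrow> real" where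
  "mu Psi C \<beta> \<gamma> V t x = 1/2 * negpart (Vdx 4 (Vdx 4 V) t x
       - lam Psi C \<beta> \<gamma> V t x * CdSig (CdSig C) t (xS x) (xSig x))"

definition ztil :: "real4 \<Rightarrow> (real \<Rightarrow> real \<Rightarrow> real \<Rightarrow> real) \<Rightarrow> (real \<Rightarrow> real \<Rightarrow> real \<Rightarrow> real \<Rightarrow> real) \<Rightarrow>
     (real \<Rightarrow> real \<Rightarrow> real \<Rightarrow> real \<Rightarrow> real) \<Rightarrow> (real \<Rightarrow> real4 \<Rightarrow> real) \<Rightarrow> real \<Rightarrow> real4 \<Rightarrow> real4" where
  "ztil Psi C \<beta> \<gamma> V t x = (let c = cvec C t x; v = vvec \<beta> \<gamma> V t x;
       l = lam Psi C \<beta> \<gamma> V t x; m = mu Psi C \<beta> \<gamma> V t x in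
     (c1 Psi * (c1 v - l * c1 c), c2 Psi * (c2 v - l * c2 c),
      c3 Psi * (c3 v - l * c3 c), c4 Psi * (c4 v - l * c4 c + m)))"

definition zpsi :: "real \<Rightarrow> real \<Rightarrow> real4 \<Rightarrow> (real \<Rightarrow> real \<Rightarrow> real \<Rightarrow> real) \<Rightarrow> (real \<Rightarrow> real \<Rightarrow> real \<Rightarrow> real \<Rightarrow> real) \<Rightarrow>
     (real \<Rightarrow> real \<Rightarrow> real \<Rightarrow> real \<Rightarrow> real) \<Rightarrow> (real \<Rightarrow> real4 \<Rightarrow> real) \<Rightarrow> real \<Rightarrow> real \<Rightarrow> real4 \<Rightarrow> real4" where
  "zpsi Slo Shi Psi C \<beta> \<gamma> V \<psi> t x = zeta0 (xSig x) +
     (if Slo < xSig x \<and> xSig x < Shi then \<psi> *\<^sub>R ztil Psi C \<beta> \<gamma> V t x else 0)"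

definition gtil :: "real4 \<Rightarrow> (real \<Rightarrow> real \<Rightarrow> real \<Rightarrow> real) \<Rightarrow> (real \<Rightarrow> real \<Rightarrow> real \<Rightarrow> real \<Rightarrow> real) \<Rightarrow>
     (real \<Rightarrow> real \<Rightarrow> real \<Rightarrow> real \<Rightarrow> real) \<Rightarrow> (real \<Rightarrow> real4 \<Rightarrow> real) \<Rightarrow> real \<Rightarrow> real4 \<Rightarrow> real" where
  "gtil Psi C \<beta> \<gamma> V t x = dot4 (vvec \<beta> \<gamma> V t x) (ztil Psi C \<beta> \<gamma> V t x)"

definition H1 :: "real4 \<Rightarrow> (real \<Rightarrow> real \<Rightarrow> real \<Rightarrow> real \<Rightarrow> real) \<Rightarrow> (real \<Rightarrow> real \<Rightarrow> real \<Rightarrow> real \<Rightarrow> real) \<Rightarrow>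
     (real \<Rightarrow> real4 \<Rightarrow> real) \<Rightarrow> real \<Rightarrow> real \<Rightarrow> real4 \<Rightarrow> real4 \<Rightarrow> real" where
  "H1 Psi \<beta> \<gamma> V \<psi> t x z = (let d = z - zeta0 (xSig x) in
     1 / (2 * \<psi>) * wdot (inv4 Psi) d d - dot4 (vvec \<beta> \<gamma> V t x) d)"

definition ups_star :: "(real \<Rightarrow> real \<Rightarrow> real \<Rightarrow> real) \<Rightarrow> (real \<Rightarrow> real \<Rightarrow> real \<Rightarrow> real \<Rightarrow> real) \<Rightarrow>
     (real \<Rightarrow> real4 \<Rightarrow> real) \<Rightarrow> real \<Rightarrow> real4 \<Rightarrow> real \<times> real" where
  "ups_star C \<gamma> V t x = (let r = Vdx 4 V t x / CdSig C t (xS x) (xSig x) in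
     (Del \<gamma> V t x - r * CdS C t (xS x) (xSig x), r))"

end

theory Submission
  imports Defs
begin

(*
  Write d = z - zeta0 Sigma, v for vvec, and u = mu e4 - lambda c for the multiplier term.  Then H1
  is the quadratic |d|^2 / (2 psi) - v.d in the Psi^-1-weighted norm, and completing the square
  around psi ztil = psi Psi (v + u) gives

      H1 = - psi/2 gtil + u.d + |d - psi ztil|^2 / (2 psi),

  because u is Psi-orthogonal to v + u: this is complementary slackness for lambda and mu, which
  make ztil the Psi-weighted projection of Psi v onto {zeta. c.zeta = 0, zeta_4 >= 0}.  For (a) the
  square is nonnegative, and on the call constraint bC = 0 the linear part c.d is minus the
  quadratic part of bC, so u.d = O(|d|^2) = O(K^2 psi^2).  For (b), d - psi ztil = z - zpsi is the
  O(psi^2) error, so u.(z - zpsi) and |z - zpsi|^2 / (2 psi) are O(psi^2); outside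
  (Slo, Shi) the same computation applies with u = - v.  Orthogonality also gives the uniform bound
  |u|_Psi <= |v|_Psi, and |v| is bounded by KV.  Integrability of the constants K1 follows from K in L^4 through pointwise
  polynomial bounds.
*)

section \<open>Weighted quadratic forms on \<open>real4\<close>\<close>

lemma c_Pair [simp]: "c1 (a,b,c,d) = a" "c2 (a,b,c,d) = b" "c3 (a,b,c,d) = c" "c4 (a,b,c,d) = d"
  by (simp_all add: c1_def c2_def c3_def c4_def)

lemma c_arith [simp]:
  "c1 (z + w) = c1 z + c1 w" "c2 (z + w) = c2 z + c2 w" "c3 (z + w) = c3 z + c3 w" "c4 (z + w) = c4 z + c4 w"
  "c1 (z - w) = c1 z - c1 w" "c2 (z - w) = c2 z - c2 w" "c3 (z - w) = c3 z - c3 w" "c4 (z - w) = c4 z - c4 w"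
  "c1 (- z) = - c1 z" "c2 (- z) = - c2 z" "c3 (- z) = - c3 z" "c4 (- z) = - c4 z"
  "c1 (r *\<^sub>R z) = r * c1 z" "c2 (r *\<^sub>R z) = r * c2 z" "c3 (r *\<^sub>R z) = r * c3 z" "c4 (r *\<^sub>R z) = r * c4 z"
  "c1 (0::real4) = 0" "c2 (0::real4) = 0" "c3 (0::real4) = 0" "c4 (0::real4) = 0"
  by (simp_all add: c1_def c2_def c3_def c4_def)

lemma dot4_eq_inner: "dot4 a b = inner a b"
  by (simp add: dot4_def inner_prod_def c1_def c2_def c3_def c4_def)

lemma power2_norm_real4: "(norm z)\<^sup>2 = (c1 z)\<^sup>2 + (c2 z)\<^sup>2 + (c3 z)\<^sup>2 + (c4 z)\<^sup>2"
  unfolding power2_norm_eq_inner dot4_eq_inner[symmetric] by (simp add: dot4_def power2_eq_square)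

lemma abs_c_le_norm:
  fixes z :: real4
  shows "\<bar>c1 z\<bar> \<le> norm z" "\<bar>c2 z\<bar> \<le> norm z" "\<bar>c3 z\<bar> \<le> norm z" "\<bar>c4 z\<bar> \<le> norm z"
  using power2_norm_real4[of z] abs_le_square_iff[of _ "norm z"] by (simp_all add: add_nonneg_nonneg)

lemma norm_real4_le_sum_abs: "norm z \<le> \<bar>c1 z\<bar> + \<bar>c2 z\<bar> + \<bar>c3 z\<bar> + \<bar>c4 z\<bar>"
proof -
  obtain a b c d where z: "z = (a, b, c, d)" by (cases z) auto
  have "norm z \<le> norm a + norm (b, c, d)" unfolding z by (rule norm_Pair_le)
  also have "norm (b, c, d) \<le> norm b + norm (c, d)" by (rule norm_Pair_le)
  also have "norm (c, d) \<le> norm c + norm d" by (rule norm_Pair_le)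
  finally show ?thesis by (simp add: z)
qed

lemma mult_le_of_abs_le:
  fixes a b A B :: real
  assumes "\<bar>a\<bar> \<le> A" "\<bar>b\<bar> \<le> B"
  shows "a * b \<le> A * B"
proof -
  have "a * b \<le> \<bar>a\<bar> * \<bar>b\<bar>" by (simp add: abs_mult[symmetric])
  also have "\<dots> \<le> A * B" using assms by (intro mult_mono) auto
  finally show ?thesis .
qed

definition positive_weights :: "real4 \<Rightarrow> bool" where
  "positive_weights P \<longleftrightarrow> 0 < c1 P \<and> 0 < c2 P \<and> 0 < c3 P \<and> 0 < c4 P"

definition wmul :: "real4 \<Rightarrow> real4 \<Rightarrow> real4" where
  "wmul P r = (c1 P * c1 r, c2 P * c2 r, c3 P * c3 r, c4 P * c4 r)"

definition wmin :: "real4 \<Rightarrow> real" where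
  "wmin P = min (min (c1 P) (c2 P)) (min (c3 P) (c4 P))"

definition wmax :: "real4 \<Rightarrow> real" where
  "wmax P = max (max (c1 P) (c2 P)) (max (c3 P) (c4 P))"

lemma dot4_wmul: "dot4 a (wmul P b) = wdot P a b"
  by (simp add: dot4_def wdot_def wmul_def algebra_simps)

lemma wdot_ge_norm:
  assumes "m \<le> c1 W" "m \<le> c2 W" "m \<le> c3 W" "m \<le> c4 W"
  shows "m * (norm u)\<^sup>2 \<le> wdot W u u"
proof -
  have h: "m * a\<^sup>2 \<le> w * a * a" if "m \<le> w" for w a :: real
    using mult_right_mono[OF that, of "a\<^sup>2"] by (simp add: power2_eq_square mult.assoc)
  show ?thesis
    using h[OF assms(1), of "c1 u"] h[OF assms(2), of "c2 u"] h[OF assms(3), of "c3 u"]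
      h[OF assms(4), of "c4 u"]
    unfolding power2_norm_real4 wdot_def by (simp add: distrib_left)
qed

lemma wdot_le_norm:
  assumes "c1 W \<le> M" "c2 W \<le> M" "c3 W \<le> M" "c4 W \<le> M"
  shows "wdot W u u \<le> M * (norm u)\<^sup>2"
proof -
  have h: "w * a * a \<le> M * a\<^sup>2" if "w \<le> M" for w a :: real
    using mult_right_mono[OF that, of "a\<^sup>2"] by (simp add: power2_eq_square mult.assoc)
  show ?thesis
    using h[OF assms(1), of "c1 u"] h[OF assms(2), of "c2 u"] h[OF assms(3), of "c3 u"]
      h[OF assms(4), of "c4 u"]
    unfolding power2_norm_real4 wdot_def by (simp add: distrib_left)
qed

lemma wmin_le: "wmin P \<le> c1 P" "wmin P \<le> c2 P" "wmin P \<le> c3 P" "wmin P \<le> c4 P"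
  by (simp_all add: wmin_def)

lemma le_wmax: "c1 P \<le> wmax P" "c2 P \<le> wmax P" "c3 P \<le> wmax P" "c4 P \<le> wmax P"
  by (simp_all add: wmax_def)

lemma wmin_pos: "positive_weights P \<Longrightarrow> wmin P > 0"
  by (simp add: wmin_def positive_weights_def)

lemma wdot_nonneg: "positive_weights P \<Longrightarrow> wdot P u u \<ge> 0"
  using wdot_ge_norm[of 0 P u] by (simp add: positive_weights_def)

lemma positive_weights_inv4: "positive_weights P \<Longrightarrow> positive_weights (inv4 P)"
  by (simp add: positive_weights_def inv4_def)

lemma inv4_le_inverse_wmin:
  assumes "positive_weights P"
  shows "c1 (inv4 P) \<le> 1 / wmin P" "c2 (inv4 P) \<le> 1 / wmin P"
    "c3 (inv4 P) \<le> 1 / wmin P" "c4 (inv4 P) \<le> 1 / wmin P"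
  using wmin_pos[OF assms] wmin_le[of P] assms by (simp_all add: inv4_def frac_le positive_weights_def)

lemma wdot_le_of_orthogonal:
  assumes P: "positive_weights P" and orth: "wdot P u (b + u) = 0"
  shows "wdot P u u \<le> wdot P b b"
proof -
  have "wdot P b b = wdot P (b + u) (b + u) + wdot P u u - 2 * wdot P u (b + u)"
    by (simp add: wdot_def algebra_simps)
  then show ?thesis using orth wdot_nonneg[OF P, of "b + u"] by simp
qed

lemma norm_le_of_orthogonal:
  assumes P: "positive_weights P" and orth: "wdot P u (b + u) = 0"
  shows "norm u \<le> wmax P / wmin P * norm b"
proof -
  have m: "wmin P > 0" using wmin_pos[OF P] .
  have kappa: "wmax P / wmin P \<ge> 1" using m wmin_le(1)[of P] le_wmax(1)[of P] by simp
  have "wmin P * (norm u)\<^sup>2 \<le> wmax P * (norm b)\<^sup>2"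
    using wdot_ge_norm[OF wmin_le, of P u] wdot_le_of_orthogonal[OF P orth]
      wdot_le_norm[OF le_wmax, of P b] by linarith
  then have "(norm u)\<^sup>2 \<le> wmax P / wmin P * (norm b)\<^sup>2"
    using m by (simp add: field_simps)
  also have "\<dots> \<le> (wmax P / wmin P)\<^sup>2 * (norm b)\<^sup>2"
    using kappa mult_left_mono[of 1 "wmax P / wmin P" "wmax P / wmin P"]
    by (intro mult_right_mono) (simp_all add: power2_eq_square)
  also have "\<dots> = (wmax P / wmin P * norm b)\<^sup>2" by (rule power_mult_distrib[symmetric])
  finally have "(norm u)\<^sup>2 \<le> (wmax P / wmin P * norm b)\<^sup>2" .
  moreover have "0 \<le> wmax P / wmin P * norm b"
    using kappa by (metis mult_nonneg_nonneg norm_ge_zero order_trans zero_le_one)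
  ultimately show ?thesis by (rule power2_le_imp_le)
qed

text \<open>Completing the square around \<open>\<psi> \<Psi>(b + u)\<close>; orthogonality cancels the cross term
  \<open>\<psi> u \<bullet> \<Psi>(b + u)\<close>.\<close>
lemma weighted_quadratic_split:
  fixes P b u e :: real4
  assumes P: "c1 P \<noteq> 0" "c2 P \<noteq> 0" "c3 P \<noteq> 0" "c4 P \<noteq> 0" and "\<psi> \<noteq> 0"
    and orth: "wdot P u (b + u) = 0"
  defines "d \<equiv> \<psi> *\<^sub>R wmul P (b + u) + e"
  shows "1 / (2 * \<psi>) * wdot (inv4 P) d d - dot4 b d
         = - \<psi> / 2 * dot4 b (wmul P (b + u)) + dot4 u e + 1 / (2 * \<psi>) * wdot (inv4 P) e e"
proof -
  have comp: "1 / (2 * \<psi>) * ((1 / p) * (\<psi> * (p * (b' + u')) + e') * (\<psi> * (p * (b' + u')) + e'))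
      - b' * (\<psi> * (p * (b' + u')) + e')
      = - \<psi> / 2 * (b' * (p * (b' + u'))) + u' * e' + 1 / (2 * \<psi>) * ((1 / p) * e' * e')
        + \<psi> / 2 * (p * u' * (b' + u'))" if "p \<noteq> 0" for p b' u' e' :: real
    using that \<open>\<psi> \<noteq> 0\<close> by (simp add: field_simps)
  have "1 / (2 * \<psi>) * wdot (inv4 P) d d - dot4 b d
        = - \<psi> / 2 * dot4 b (wmul P (b + u)) + dot4 u e + 1 / (2 * \<psi>) * wdot (inv4 P) e e
          + \<psi> / 2 * wdot P u (b + u)"
    using comp[OF P(1), of "c1 b" "c1 u" "c1 e"] comp[OF P(2), of "c2 b" "c2 u" "c2 e"]
      comp[OF P(3), of "c3 b" "c3 u" "c3 e"] comp[OF P(4), of "c4 b" "c4 u" "c4 e"]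
    unfolding d_def wdot_def dot4_def inv4_def wmul_def by (simp add: algebra_simps)
  then show ?thesis using orth by simp
qed

lemma weighted_quadratic_lower:
  fixes P b u d :: real4
  assumes P: "positive_weights P" and "\<psi> > 0"
    and orth: "wdot P u (b + u) = 0"
  shows "1 / (2 * \<psi>) * wdot (inv4 P) d d - dot4 b d
         \<ge> - \<psi> / 2 * dot4 b (wmul P (b + u)) + dot4 u d"
proof -
  define e where "e = d - \<psi> *\<^sub>R wmul P (b + u)"
  have d: "d = \<psi> *\<^sub>R wmul P (b + u) + e" by (simp add: e_def)
  have "dot4 u d = dot4 u e + \<psi> * wdot P u (b + u)"
    unfolding d dot4_wmul[symmetric] by (simp add: dot4_eq_inner inner_add_right)
  then have "dot4 u d = dot4 u e" using orth by simp
  moreover have "wdot (inv4 P) e e \<ge> 0" by (rule wdot_nonneg[OF positive_weights_inv4[OF P]])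
  moreover have "1 / (2 * \<psi>) * wdot (inv4 P) d d - dot4 b d
      = - \<psi> / 2 * dot4 b (wmul P (b + u)) + dot4 u e + 1 / (2 * \<psi>) * wdot (inv4 P) e e"
    unfolding d using P \<open>\<psi> > 0\<close> orth by (intro weighted_quadratic_split) (auto simp: positive_weights_def)
  ultimately show ?thesis using \<open>\<psi> > 0\<close> by simp
qed

lemma dot4_add_scaled_wdot_le:
  fixes u e W :: real4
  assumes \<psi>: "0 < \<psi>" "\<psi> < 1" and u: "norm u \<le> R" and e: "norm e \<le> Kb * \<psi>\<^sup>2"
    and W: "c1 W \<le> q" "c2 W \<le> q" "c3 W \<le> q" "c4 W \<le> q" "0 \<le> q"
  shows "dot4 u e + 1 / (2 * \<psi>) * wdot W e e \<le> (R + q / 2) * (Kb + Kb\<^sup>2) * \<psi>\<^sup>2"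
proof -
  have R: "R \<ge> 0" using u norm_ge_zero[of u] by linarith
  have Kb: "Kb \<ge> 0" using e \<psi>(1) norm_ge_zero[of e] by (smt (verit) mult_neg_pos zero_less_power)
  have "dot4 u e \<le> norm u * norm e" unfolding dot4_eq_inner by (rule norm_cauchy_schwarz)
  also have "\<dots> \<le> R * (Kb * \<psi>\<^sup>2)" using u e R by (intro mult_mono) auto
  finally have lin: "dot4 u e \<le> R * Kb * \<psi>\<^sup>2" by simp
  have "wdot W e e \<le> q * (norm e)\<^sup>2" by (rule wdot_le_norm[OF W(1-4)])
  also have "\<dots> \<le> q * (Kb * \<psi>\<^sup>2)\<^sup>2" using e W(5) by (intro mult_left_mono power_mono) auto
  finally have "1 / (2 * \<psi>) * wdot W e e \<le> q / 2 * Kb\<^sup>2 * \<psi>\<^sup>2 * \<psi>"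
    using \<psi> by (simp add: field_simps power2_eq_square)
  also have "\<dots> \<le> q / 2 * Kb\<^sup>2 * \<psi>\<^sup>2" using \<psi> W(5) by (simp add: mult_left_le)
  finally have quad: "1 / (2 * \<psi>) * wdot W e e \<le> q / 2 * Kb\<^sup>2 * \<psi>\<^sup>2" .
  have "R * Kb * \<psi>\<^sup>2 + q / 2 * Kb\<^sup>2 * \<psi>\<^sup>2 \<le> (R + q / 2) * (Kb + Kb\<^sup>2) * \<psi>\<^sup>2"
    using R Kb W(5) by (simp add: algebra_simps)
  with lin quad show ?thesis by linarith
qed

section \<open>The multipliers \<open>\<lambda>\<close> and \<open>\<mu>\<close>\<close>

text \<open>With \<open>u = m e\<^sub>4 - l a\<close>, the vector \<open>P(b + u)\<close> is the projection of \<open>P b\<close> onto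
  \<open>{\<zeta>. a \<bullet> \<zeta> = 0, \<zeta>\<^sub>4 \<ge> 0}\<close> in the norm weighted by \<open>inv4 P\<close>, and the conclusion is
  complementary slackness.  The two branches of \<open>l\<close> are the cases where the sign constraint is
  inactive (\<open>m = 0\<close>) or active (\<open>b\<^sub>4 + u\<^sub>4 = 0\<close>).\<close>
lemma multiplier_orthogonal:
  fixes P a b :: real4 and l m :: real
  assumes P: "positive_weights P" and a1: "c1 a \<noteq> 0"
    and l: "l = (if c4 b - wdot P a b / wdot P a a * c4 a \<ge> 0 then wdot P a b / wdot P a a
                 else (wdot P a b - c4 P * c4 a * c4 b) / (wdot P a a - c4 P * (c4 a)\<^sup>2))"
    and m: "m = negpart (c4 b - l * c4 a)"
  shows "wdot P (m *\<^sub>R (0, 0, 0, 1) - l *\<^sub>R a) (b + (m *\<^sub>R (0, 0, 0, 1) - l *\<^sub>R a)) = 0"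
proof -
  define A where "A = wdot P a b"
  define B where "B = wdot P a a"
  define B' where "B' = B - c4 P * (c4 a)\<^sup>2"
  have P1: "c1 P > 0" and P2: "c2 P > 0" and P3: "c3 P > 0" and P4: "c4 P > 0"
    using P by (simp_all add: positive_weights_def)
  have B'_pos: "B' > 0"
  proof -
    have "c1 P * c1 a * c1 a > 0"
      using P1 a1 by (metis mult.assoc mult_pos_pos not_real_square_gt_zero)
    moreover have "c2 P * c2 a * c2 a \<ge> 0" "c3 P * c3 a * c3 a \<ge> 0"
      using P2 P3 by (simp_all add: mult.assoc)
    ultimately show ?thesis by (simp add: B'_def B_def wdot_def power2_eq_square)
  qed
  have B_pos: "B > 0"
    using B'_pos P4 zero_le_power2[of "c4 a"] mult_nonneg_nonneg[of "c4 P" "(c4 a)\<^sup>2"]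
    unfolding B'_def by linarith
  show ?thesis
  proof (cases "c4 b - A / B * c4 a \<ge> 0")
    case True
    then have lB: "l * B = A" and m0: "m = 0" using l m B_pos by (simp_all add: A_def B_def negpart_def)
    have "wdot P (m *\<^sub>R (0, 0, 0, 1) - l *\<^sub>R a) (b + (m *\<^sub>R (0, 0, 0, 1) - l *\<^sub>R a))
      = - l * (A - l * B)"
      using m0 by (simp add: A_def B_def wdot_def algebra_simps)
    then show ?thesis using lB by simp
  next
    case False
    then have l': "l = (A - c4 P * c4 a * c4 b) / B'" using l by (simp add: A_def B_def B'_def)
    have "c4 b - l * c4 a = B * (c4 b - A / B * c4 a) / B'"
      using B_pos B'_pos unfolding l' by (simp add: B'_def field_simps power2_eq_square)
    also have "\<dots> < 0" using False B_pos B'_pos by (simp add: divide_neg_pos mult_pos_neg)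
    finally have "m = l * c4 a - c4 b" using m by (simp add: negpart_def)
    then have "wdot P (m *\<^sub>R (0, 0, 0, 1) - l *\<^sub>R a) (b + (m *\<^sub>R (0, 0, 0, 1) - l *\<^sub>R a))
      = - l * ((A - c4 P * c4 a * c4 b) - l * B')"
      by (simp add: A_def B'_def B_def wdot_def algebra_simps power2_eq_square)
    moreover have "l * B' = A - c4 P * c4 a * c4 b" using B'_pos l' by simp
    ultimately show ?thesis by simp
  qed
qed

definition lagrange_term :: "real4 \<Rightarrow> (real \<Rightarrow> real \<Rightarrow> real \<Rightarrow> real) \<Rightarrow>
    (real \<Rightarrow> real \<Rightarrow> real \<Rightarrow> real \<Rightarrow> real) \<Rightarrow> (real \<Rightarrow> real \<Rightarrow> real \<Rightarrow> real \<Rightarrow> real) \<Rightarrow>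
    (real \<Rightarrow> real4 \<Rightarrow> real) \<Rightarrow> real \<Rightarrow> real4 \<Rightarrow> real4" where
  "lagrange_term Psi C \<beta> \<gamma> V t x =
     mu Psi C \<beta> \<gamma> V t x *\<^sub>R (0, 0, 0, 1) - lam Psi C \<beta> \<gamma> V t x *\<^sub>R cvec C t x"

lemma ztil_eq: "ztil Psi C \<beta> \<gamma> V t x = wmul Psi (vvec \<beta> \<gamma> V t x + lagrange_term Psi C \<beta> \<gamma> V t x)"
  by (simp add: ztil_def wmul_def lagrange_term_def Let_def algebra_simps)

lemma cvec_c4: "CdSig (CdSig C) t (xS x) (xSig x) = 2 * c4 (cvec C t x)"
  by (simp add: cvec_def Let_def)

lemma vvec_c4: "Vdx 4 (Vdx 4 V) t x = 2 * c4 (vvec \<beta> \<gamma> V t x)"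
  by (simp add: vvec_def Let_def)

lemma lam_eq:
  fixes Psi :: real4 and C :: "real \<Rightarrow> real \<Rightarrow> real \<Rightarrow> real" and V :: "real \<Rightarrow> real4 \<Rightarrow> real"
    and \<beta> \<gamma> :: "real \<Rightarrow> real \<Rightarrow> real \<Rightarrow> real \<Rightarrow> real" and t :: real and x :: real4
  defines "a \<equiv> cvec C t x" and "b \<equiv> vvec \<beta> \<gamma> V t x"
  shows "lam Psi C \<beta> \<gamma> V t x =
    (if c4 b - wdot Psi a b / wdot Psi a a * c4 a \<ge> 0 then wdot Psi a b / wdot Psi a a
     else (wdot Psi a b - c4 Psi * c4 a * c4 b) / (wdot Psi a a - c4 Psi * (c4 a)\<^sup>2))"
proof -
  define l0 where "l0 = wdot Psi a b / wdot Psi a a"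
  have cond: "(2 * c4 b - l0 * (2 * c4 a) \<ge> 0) = (c4 b - l0 * c4 a \<ge> 0)"
    by (simp add: algebra_simps)
  have alt: "(wdot Psi a b - 1/4 * (2 * c4 a) * (2 * c4 b) * c4 Psi) / (wdot Psi a a - 1/4 * (2 * c4 a)\<^sup>2 * c4 Psi)
      = (wdot Psi a b - c4 Psi * c4 a * c4 b) / (wdot Psi a a - c4 Psi * (c4 a)\<^sup>2)"
    by (simp add: power2_eq_square algebra_simps)
  show ?thesis
    unfolding lam_def Let_def cvec_c4 vvec_c4[of V t x \<beta> \<gamma>] a_def[symmetric] b_def[symmetric]
      l0_def[symmetric] cond alt ..
qed

lemma mu_eq: "mu Psi C \<beta> \<gamma> V t x = negpart (c4 (vvec \<beta> \<gamma> V t x) - lam Psi C \<beta> \<gamma> V t x * c4 (cvec C t x))"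
proof -
  have factor: "2 * r - l * (2 * s) = 2 * (r - l * s)" for r l s :: real by (simp add: algebra_simps)
  have negpart_double: "negpart (2 * r) = 2 * negpart r" for r :: real by (auto simp: negpart_def max_def)
  show ?thesis unfolding mu_def cvec_c4 vvec_c4[of V t x \<beta> \<gamma>] factor negpart_double by simp
qed

lemma lagrange_term_orthogonal:
  assumes P: "positive_weights Psi"
    and "CdSig C t (xS x) (xSig x) \<noteq> 0"
  shows "wdot Psi (lagrange_term Psi C \<beta> \<gamma> V t x)
           (vvec \<beta> \<gamma> V t x + lagrange_term Psi C \<beta> \<gamma> V t x) = 0"
  unfolding lagrange_term_def
  using assms by (intro multiplier_orthogonal lam_eq mu_eq) (simp_all add: cvec_def Let_def)

lemma norm_lagrange_term_le:
  assumes P: "positive_weights Psi"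
    and "CdSig C t (xS x) (xSig x) \<noteq> 0"
  shows "norm (lagrange_term Psi C \<beta> \<gamma> V t x) \<le> wmax Psi / wmin Psi * norm (vvec \<beta> \<gamma> V t x)"
  using norm_le_of_orthogonal[OF P lagrange_term_orthogonal[OF assms]] .

lemma norm_vvec_le:
  assumes "0 \<le> xSig x" "xSig x \<le> Shi"
    and "\<bar>Vdx 4 V t x\<bar> \<le> KV" "\<bar>gam_at \<beta> t x * Vdx 2 V t x + (xS x)\<^sup>2 * Gam \<gamma> V t x\<bar> \<le> KV"
      "\<bar>xS x * dDel_dSig \<gamma> V t x\<bar> \<le> KV" "\<bar>Vdx 4 (Vdx 4 V) t x\<bar> \<le> KV"
  shows "norm (vvec \<beta> \<gamma> V t x) \<le> 2 * (1 + Shi) * \<bar>KV\<bar>"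
proof -
  have "\<bar>xSig x * r\<bar> \<le> Shi * \<bar>KV\<bar>" if "\<bar>r\<bar> \<le> KV" for r
    using assms(1,2) that by (simp add: abs_mult mult_mono)
  from this[OF assms(4)] this[OF assms(5)]
  have "\<bar>c1 (vvec \<beta> \<gamma> V t x)\<bar> + \<bar>c2 (vvec \<beta> \<gamma> V t x)\<bar> + \<bar>c3 (vvec \<beta> \<gamma> V t x)\<bar>
        + \<bar>c4 (vvec \<beta> \<gamma> V t x)\<bar> \<le> 2 * (1 + Shi) * \<bar>KV\<bar>"
    using assms(3,6) abs_ge_zero[of "Vdx 4 (Vdx 4 V) t x"]
    by (simp add: vvec_def Let_def abs_mult mult.assoc algebra_simps, linarith)
  then show ?thesis using norm_real4_le_sum_abs order_trans by blast
qed

text \<open>On \<open>bC = 0\<close> the linear part \<open>c \<bullet> d\<close> equals minus the quadratic part of \<open>bC\<close>, so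
  only second-order terms in \<open>d\<close> survive.\<close>
lemma call_constraint_remainder_ge:
  fixes C :: "real \<Rightarrow> real \<Rightarrow> real \<Rightarrow> real" and t l m :: real and x z :: real4
  assumes bC: "bC C t x z = 0" and z4: "c4 z \<ge> 0" and m: "m \<ge> 0"
    and sig: "0 < Slo" "Slo \<le> xSig x"
  defines "u \<equiv> m *\<^sub>R (0, 0, 0, 1) - l *\<^sub>R cvec C t x" and "d \<equiv> z - zeta0 (xSig x)"
  assumes u: "norm u \<le> R"
  shows "dot4 u d \<ge> - (2 / Slo + 1) * R * (norm d)\<^sup>2"
proof -
  let ?s = "xSig x"
  have s: "?s > 0" using sig by linarith
  have "dot4 u d - (m * c4 z + m * (c3 z)\<^sup>2 - c2 u / ?s * ((c2 d)\<^sup>2 / 2) - c3 u / ?s * (c2 d * c3 d)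
          - c4 u * (c3 d)\<^sup>2) = - l * bC C t x z"
    using s unfolding u_def d_def
    by (simp add: bC_def cvec_def dot4_def zeta0_def Let_def field_simps power2_eq_square)
  then have ident: "dot4 u d = m * c4 z + m * (c3 z)\<^sup>2 - c2 u / ?s * ((c2 d)\<^sup>2 / 2)
      - c3 u / ?s * (c2 d * c3 d) - c4 u * (c3 d)\<^sup>2"
    using bC by simp
  define N where "N = norm d"
  have uR: "\<bar>c2 u\<bar> \<le> R" "\<bar>c3 u\<bar> \<le> R" "\<bar>c4 u\<bar> \<le> R"
    using abs_c_le_norm[of u] u by linarith+
  have dN: "\<bar>c2 d\<bar> \<le> N" "\<bar>c3 d\<bar> \<le> N" using abs_c_le_norm[of d] unfolding N_def by simp_all
  have R: "R \<ge> 0" using uR(1) by linarith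
  have quot: "\<bar>r / ?s\<bar> \<le> R / Slo" if "\<bar>r\<bar> \<le> R" for r
  proof -
    have "\<bar>r / ?s\<bar> \<le> R / ?s" using that s by (simp add: abs_div divide_right_mono)
    also have "\<dots> \<le> R / Slo" using R sig by (intro divide_left_mono) auto
    finally show ?thesis .
  qed
  have sq: "\<bar>(c2 d)\<^sup>2 / 2\<bar> \<le> N\<^sup>2 / 2" "\<bar>c2 d * c3 d\<bar> \<le> N\<^sup>2" "\<bar>(c3 d)\<^sup>2\<bar> \<le> N\<^sup>2"
    using power_mono[OF dN(1), of 2] power_mono[OF dN(2), of 2] mult_mono'[OF dN abs_ge_zero abs_ge_zero]
    by (simp_all add: abs_mult power2_eq_square)
  have "c2 u / ?s * ((c2 d)\<^sup>2 / 2) \<le> R / Slo * (N\<^sup>2 / 2)"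
    by (rule mult_le_of_abs_le[OF quot[OF uR(1)] sq(1)])
  moreover have "c3 u / ?s * (c2 d * c3 d) \<le> R / Slo * N\<^sup>2"
    by (rule mult_le_of_abs_le[OF quot[OF uR(2)] sq(2)])
  moreover have "c4 u * (c3 d)\<^sup>2 \<le> R * N\<^sup>2" by (rule mult_le_of_abs_le[OF uR(3) sq(3)])
  moreover have "m * c4 z + m * (c3 z)\<^sup>2 \<ge> 0" using m z4 by simp
  moreover have "R / Slo * N\<^sup>2 \<ge> 0" using R sig by simp
  ultimately show ?thesis unfolding ident N_def[symmetric] by (simp add: algebra_simps)
qed

section \<open>Pointwise bounds on \<open>H1\<close>\<close>

lemma H1_lower_bound:
  assumes P: "positive_weights Psi"
    and CS: "CdSig C t (xS x) (xSig x) \<noteq> 0" and sig: "0 < Slo" "Slo \<le> xSig x"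
    and v: "norm (vvec \<beta> \<gamma> V t x) \<le> Vb" and z: "z \<in> Z0 C t x"
    and \<psi>: "0 < \<psi>" and d: "norm (z - zeta0 (xSig x)) \<le> K * \<psi>"
  shows "H1 Psi \<beta> \<gamma> V \<psi> t x z
         \<ge> - 1/2 * gtil Psi C \<beta> \<gamma> V t x * \<psi> - (2 / Slo + 1) * (wmax Psi / wmin Psi * Vb) * K\<^sup>2 * \<psi>\<^sup>2"
proof -
  let ?d = "z - zeta0 (xSig x)" and ?u = "lagrange_term Psi C \<beta> \<gamma> V t x"
  let ?R = "wmax Psi / wmin Psi * Vb"
  have kappa: "wmax Psi / wmin Psi \<ge> 0"
    using wmin_pos[OF P] le_wmax(1)[of Psi] P by (simp add: positive_weights_def)
  have Vb: "Vb \<ge> 0" using v norm_ge_zero[of "vvec \<beta> \<gamma> V t x"] by linarith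
  have "H1 Psi \<beta> \<gamma> V \<psi> t x z \<ge> - 1/2 * gtil Psi C \<beta> \<gamma> V t x * \<psi> + dot4 ?u ?d"
    using weighted_quadratic_lower[OF P \<psi> lagrange_term_orthogonal[OF P CS], where d = ?d]
    unfolding H1_def Let_def gtil_def ztil_eq by (simp add: field_simps)
  moreover have "dot4 ?u ?d \<ge> - (2 / Slo + 1) * ?R * (norm ?d)\<^sup>2"
    unfolding lagrange_term_def
  proof (rule call_constraint_remainder_ge)
    show "norm (mu Psi C \<beta> \<gamma> V t x *\<^sub>R (0, 0, 0, 1) - lam Psi C \<beta> \<gamma> V t x *\<^sub>R cvec C t x) \<le> ?R"
      using norm_lagrange_term_le[OF P CS] v kappa unfolding lagrange_term_def
      by (meson mult_left_mono order_trans)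
  qed (use z sig in \<open>auto simp: Z0_def mu_def negpart_def\<close>)
  moreover have "(2 / Slo + 1) * ?R * (norm ?d)\<^sup>2 \<le> (2 / Slo + 1) * ?R * K\<^sup>2 * \<psi>\<^sup>2"
    unfolding mult.assoc[of _ "K\<^sup>2"]
  proof (rule mult_left_mono)
    show "(norm ?d)\<^sup>2 \<le> K\<^sup>2 * \<psi>\<^sup>2" using power_mono[OF d, of 2] by (simp add: power_mult_distrib)
    show "0 \<le> (2 / Slo + 1) * ?R"
      using sig kappa Vb by (intro mult_nonneg_nonneg) auto
  qed
  ultimately show ?thesis by linarith
qed

lemma H1_upper_bound:
  assumes P: "positive_weights Psi"
    and CS: "CdSig C t (xS x) (xSig x) \<noteq> 0" and v: "norm (vvec \<beta> \<gamma> V t x) \<le> Vb"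
    and \<psi>: "0 < \<psi>" "\<psi> < 1" and e: "norm (z - zpsi Slo Shi Psi C \<beta> \<gamma> V \<psi> t x) \<le> Kb * \<psi>\<^sup>2"
  shows "H1 Psi \<beta> \<gamma> V \<psi> t x z
         \<le> - 1/2 * gtil Psi C \<beta> \<gamma> V t x * (if Slo < xSig x \<and> xSig x < Shi then 1 else 0) * \<psi>
           + (wmax Psi / wmin Psi * Vb + 1 / (2 * wmin Psi)) * (Kb + Kb\<^sup>2) * \<psi>\<^sup>2"
proof -
  let ?v = "vvec \<beta> \<gamma> V t x" and ?e = "z - zpsi Slo Shi Psi C \<beta> \<gamma> V \<psi> t x"
  let ?inside = "Slo < xSig x \<and> xSig x < Shi"
  \<comment> \<open>outside \<open>(Slo, Shi)\<close> the choice \<open>u = - v\<close> gives \<open>wmul Psi (v + u) = 0\<close>, matching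
    \<open>zpsi = zeta0\<close>, so both cases are one computation\<close>
  define u where "u = (if ?inside then lagrange_term Psi C \<beta> \<gamma> V t x else - ?v)"
  have kappa: "wmax Psi / wmin Psi \<ge> 1" using wmin_pos[OF P] wmin_le(1)[of Psi] le_wmax(1)[of Psi] by simp
  have orth: "wdot Psi u (?v + u) = 0"
    using lagrange_term_orthogonal[OF P CS] by (simp add: u_def wdot_def)
  have zpsi: "zpsi Slo Shi Psi C \<beta> \<gamma> V \<psi> t x = zeta0 (xSig x) + \<psi> *\<^sub>R wmul Psi (?v + u)"
    by (simp add: zpsi_def u_def ztil_eq wmul_def zero_prod_def)
  have gtil: "gtil Psi C \<beta> \<gamma> V t x * (if ?inside then 1 else 0) = dot4 ?v (wmul Psi (?v + u))"
    by (cases ?inside) (auto simp: u_def gtil_def ztil_eq wmul_def dot4_def)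
  have "H1 Psi \<beta> \<gamma> V \<psi> t x z
        = - \<psi> / 2 * dot4 ?v (wmul Psi (?v + u)) + dot4 u ?e + 1 / (2 * \<psi>) * wdot (inv4 Psi) ?e ?e"
  proof -
    have d: "z - zeta0 (xSig x) = \<psi> *\<^sub>R wmul Psi (?v + u) + ?e" by (simp add: zpsi)
    show ?thesis unfolding H1_def Let_def d
      using P \<psi> orth by (intro weighted_quadratic_split) (auto simp: positive_weights_def)
  qed
  moreover have "norm u \<le> wmax Psi / wmin Psi * Vb"
  proof (cases ?inside)
    case True
    have "norm (lagrange_term Psi C \<beta> \<gamma> V t x) \<le> wmax Psi / wmin Psi * norm ?v"
      by (rule norm_lagrange_term_le[OF P CS])
    also have "\<dots> \<le> wmax Psi / wmin Psi * Vb" using v kappa by (intro mult_left_mono) auto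
    finally show ?thesis using True by (simp add: u_def)
  next
    case False
    have "Vb \<ge> 0" using v norm_ge_zero[of ?v] by linarith
    then have "Vb \<le> wmax Psi / wmin Psi * Vb" using mult_right_mono[OF kappa] by fastforce
    with False v show ?thesis unfolding u_def by auto
  qed
  then have "dot4 u ?e + 1 / (2 * \<psi>) * wdot (inv4 Psi) ?e ?e
      \<le> (wmax Psi / wmin Psi * Vb + 1 / wmin Psi / 2) * (Kb + Kb\<^sup>2) * \<psi>\<^sup>2"
    using inv4_le_inverse_wmin[OF P] wmin_pos[OF P] \<psi> e by (intro dot4_add_scaled_wdot_le) auto
  ultimately show ?thesis unfolding gtil[symmetric] by (simp add: algebra_simps)
qed

section \<open>Integrability of the constants\<close>

text \<open>Only one summand needs to be measurable: the integrands of \<open>Lp\<close> involve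
  \<open>t \<mapsto> K t (Xp \<omega> t)\<close>, which is not known to be measurable.\<close>
lemma nn_integral_add_le:
  assumes f: "f \<in> borel_measurable M"
  shows "(\<integral>\<^sup>+x. f x + g x \<partial>M) \<le> integral\<^sup>N M f + integral\<^sup>N M g"
proof -
  have "simple_integral M s \<le> integral\<^sup>N M f + integral\<^sup>N M g"
    if s: "simple_function M s" "s \<le> (\<lambda>x. f x + g x)" for s
  proof -
    define h where "h x = (if f x = top then 0 else s x - f x)" for x
    have sm: "s \<in> borel_measurable M" using s(1) by (rule borel_measurable_simple_function)
    have hm: "h \<in> borel_measurable M" unfolding h_def using sm f by measurable
    have le1: "s x \<le> f x + h x" for x
    proof (cases "f x = top")
      case False
      show ?thesis
      proof (cases "f x \<le> s x")
        case True
        then show ?thesis using False by (simp add: h_def add_diff_inverse_ennreal)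
      next
        case False
        then have "s x \<le> f x" by simp
        then show ?thesis by (simp add: add_increasing2)
      qed
    qed (simp add: h_def)
    have le2: "h x \<le> g x" for x
    proof (cases "f x = top")
      case False
      have "s x \<le> f x + g x" using s(2) by (simp add: le_fun_def)
      then show ?thesis using False by (simp add: h_def ennreal_minus_le_iff)
    qed (simp add: h_def)
    have "simple_integral M s = integral\<^sup>N M s" using nn_integral_eq_simple_integral[OF s(1)] by simp
    also have "\<dots> \<le> (\<integral>\<^sup>+x. f x + h x \<partial>M)" by (intro nn_integral_mono le1)
    also have "\<dots> = integral\<^sup>N M f + (\<integral>\<^sup>+x. h x \<partial>M)" using f hm by (rule nn_integral_add)
    also have "\<dots> \<le> integral\<^sup>N M f + integral\<^sup>N M g" by (intro add_left_mono nn_integral_mono le2)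
    finally show ?thesis .
  qed
  then show ?thesis unfolding nn_integral_def[of M "\<lambda>x. f x + g x"] by (intro SUP_least) auto
qed

lemma nn_integral_cmult_le:
  fixes c :: ennreal
  assumes c: "c < top"
  shows "(\<integral>\<^sup>+x. c * g x \<partial>M) \<le> c * integral\<^sup>N M g"
proof (cases "c = 0")
  case False
  have "simple_integral M s \<le> c * integral\<^sup>N M g"
    if s: "simple_function M s" "s \<le> (\<lambda>x. c * g x)" for s
  proof -
    have sm: "s \<in> borel_measurable M" using s(1) by (rule borel_measurable_simple_function)
    have eq: "s x = c * (s x / c)" for x
      using False c by (metis ennreal_times_divide mult.commute mult_divide_eq_ennreal top.not_eq_extremum)
    have le: "s x / c \<le> g x" for x
      using s(2) False by (intro divide_le_posI_ennreal) (auto simp: le_fun_def zero_less_iff_neq_zero)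
    have "simple_integral M s = integral\<^sup>N M s" using nn_integral_eq_simple_integral[OF s(1)] by simp
    also have "\<dots> = (\<integral>\<^sup>+x. c * (s x / c) \<partial>M)" by (intro nn_integral_cong) (rule eq)
    also have "\<dots> = c * (\<integral>\<^sup>+x. s x / c \<partial>M)" using sm by (intro nn_integral_cmult) simp
    also have "\<dots> \<le> c * integral\<^sup>N M g" by (intro mult_left_mono nn_integral_mono le) auto
    finally show ?thesis .
  qed
  then show ?thesis unfolding nn_integral_def[of M "\<lambda>x. c * g x"] by (intro SUP_least) auto
qed simp

lemma nn_integral_le_affine:
  assumes le: "\<And>x. f x \<le> a x + ennreal \<beta> * g x" and a: "a \<in> borel_measurable M"
  shows "integral\<^sup>N M f \<le> integral\<^sup>N M a + ennreal \<beta> * integral\<^sup>N M g"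
proof -
  have "integral\<^sup>N M f \<le> (\<integral>\<^sup>+x. a x + ennreal \<beta> * g x \<partial>M)" by (intro nn_integral_mono le)
  also have "\<dots> \<le> integral\<^sup>N M a + (\<integral>\<^sup>+x. ennreal \<beta> * g x \<partial>M)" using a by (rule nn_integral_add_le)
  also have "\<dots> \<le> integral\<^sup>N M a + ennreal \<beta> * integral\<^sup>N M g" by (intro add_left_mono nn_integral_cmult_le) simp
  finally show ?thesis .
qed

lemma Lp_of_pointwise_le:
  assumes PP: "\<forall>P\<in>PP. prob_space P" and T: "T \<ge> 0"
    and meas: "set_borel_measurable borel (D0 T) (\<lambda>(t,x). F t x)" and G: "Lp T PP q G"
    and le: "\<And>t x. \<bar>F t x\<bar> ^ p \<le> \<alpha> + \<beta> * \<bar>G t x\<bar> ^ q" and \<alpha>: "\<alpha> \<ge> 0" and \<beta>: "\<beta> \<ge> 0"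
  shows "Lp T PP p F"
proof -
  obtain B where B: "\<forall>P\<in>PP. (\<integral>\<^sup>+\<omega>. (\<integral>\<^sup>+t. indicator {0..T} t * ennreal (\<bar>G t (Xp \<omega> t)\<bar> ^ q) \<partial>lborel) \<partial>P)
                             \<le> ennreal B"
    using G unfolding Lp_def by blast
  have time: "(\<integral>\<^sup>+t. indicator {0..T} t * ennreal (\<bar>F t (Xp \<omega> t)\<bar> ^ p) \<partial>lborel)
      \<le> ennreal (\<alpha> * T) + ennreal \<beta> * (\<integral>\<^sup>+t. indicator {0..T} t * ennreal (\<bar>G t (Xp \<omega> t)\<bar> ^ q) \<partial>lborel)"
    for \<omega>
  proof -
    have "ennreal (\<bar>F t (Xp \<omega> t)\<bar> ^ p) \<le> ennreal \<alpha> + ennreal \<beta> * ennreal (\<bar>G t (Xp \<omega> t)\<bar> ^ q)" for t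
      using ennreal_leI[OF le] \<alpha> \<beta> by (simp add: ennreal_plus ennreal_mult)
    then have "indicator {0..T} t * ennreal (\<bar>F t (Xp \<omega> t)\<bar> ^ p)
        \<le> ennreal \<alpha> * indicator {0..T} t + ennreal \<beta> * (indicator {0..T} t * ennreal (\<bar>G t (Xp \<omega> t)\<bar> ^ q))" for t
      by (cases "t \<in> {0..T}") auto
    then have "(\<integral>\<^sup>+t. indicator {0..T} t * ennreal (\<bar>F t (Xp \<omega> t)\<bar> ^ p) \<partial>lborel)
      \<le> (\<integral>\<^sup>+t. ennreal \<alpha> * indicator {0..T} t \<partial>lborel)
        + ennreal \<beta> * (\<integral>\<^sup>+t. indicator {0..T} t * ennreal (\<bar>G t (Xp \<omega> t)\<bar> ^ q) \<partial>lborel)"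
      by (intro nn_integral_le_affine) auto
    also have "(\<integral>\<^sup>+t. ennreal \<alpha> * indicator {0..T} t \<partial>lborel) = ennreal (\<alpha> * T)"
      using T \<alpha> by (simp add: nn_integral_cmult_indicator ennreal_mult)
    finally show ?thesis .
  qed
  have "(\<integral>\<^sup>+\<omega>. (\<integral>\<^sup>+t. indicator {0..T} t * ennreal (\<bar>F t (Xp \<omega> t)\<bar> ^ p) \<partial>lborel) \<partial>P)
        \<le> ennreal (\<alpha> * T + \<beta> * max B 0)" if P: "P \<in> PP" for P
  proof -
    interpret prob_space P using PP P by auto
    have "(\<integral>\<^sup>+\<omega>. (\<integral>\<^sup>+t. indicator {0..T} t * ennreal (\<bar>F t (Xp \<omega> t)\<bar> ^ p) \<partial>lborel) \<partial>P)
        \<le> ennreal (\<alpha> * T) + ennreal \<beta> * ennreal B"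
      using nn_integral_le_affine[OF time, of P] B P
      by (simp add: nn_integral_const emeasure_space_1) (meson add_left_mono mult_left_mono order_trans zero_le)
    also have "\<dots> = ennreal (\<alpha> * T + \<beta> * max B 0)"
      using \<alpha> \<beta> T by (simp add: ennreal_max_0[symmetric, of B] ennreal_plus ennreal_mult del: ennreal_max_0)
    finally show ?thesis .
  qed
  then show ?thesis using meas unfolding Lp_def by blast
qed

lemma set_borel_measurable_compose:
  fixes F :: "real \<Rightarrow> real" and K :: "real \<Rightarrow> real4 \<Rightarrow> real"
  assumes K: "set_borel_measurable borel A (\<lambda>(t,x). K t x)" and F: "F \<in> borel_measurable borel"
    and F0: "F 0 = 0"
  shows "set_borel_measurable borel A (\<lambda>(t,x). F (K t x))"
proof -
  have "(\<lambda>y. indicator A y *\<^sub>R (case y of (t,x) \<Rightarrow> F (K t x)))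
        = (\<lambda>y. F (indicator A y *\<^sub>R (case y of (t,x) \<Rightarrow> K t x)))"
    by (rule ext) (auto simp: indicator_def F0 split: prod.splits)
  then show ?thesis using measurable_compose[OF K[unfolded set_borel_measurable_def] F]
    unfolding set_borel_measurable_def by simp
qed

lemma Lp_cmult_square:
  assumes PP: "\<forall>P\<in>PP. prob_space P" and T: "T \<ge> 0" and K: "Lp T PP 4 K" and M: "M \<ge> 0"
  shows "Lp T PP 1 (\<lambda>t x. M * (K t x)\<^sup>2)"
proof (rule Lp_of_pointwise_le[OF PP T _ K])
  show "set_borel_measurable borel (D0 T) (\<lambda>(t,x). M * (K t x)\<^sup>2)"
    using K unfolding Lp_def by (intro set_borel_measurable_compose[where F = "\<lambda>k. M * k\<^sup>2"]) auto
  have "M * k\<^sup>2 \<le> M / 2 + M / 2 * \<bar>k\<bar> ^ 4" for k :: real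
  proof -
    have "k\<^sup>2 \<le> 1 / 2 + 1 / 2 * k ^ 4"
      using zero_le_power2[of "k\<^sup>2 - 1"] by (simp add: power2_diff flip: power_mult)
    then have "M * k\<^sup>2 \<le> M * (1 / 2 + 1 / 2 * k ^ 4)" using M by (rule mult_left_mono)
    then show ?thesis by (simp add: algebra_simps)
  qed
  then show "\<bar>M * (K t x)\<^sup>2\<bar> ^ 1 \<le> M / 2 + M / 2 * \<bar>K t x\<bar> ^ 4" for t x using M by simp
qed (use M in simp_all)

lemma Lp_cmult_add_square:
  assumes PP: "\<forall>P\<in>PP. prob_space P" and T: "T \<ge> 0" and K: "Lp T PP 4 K"
  shows "Lp T PP 2 (\<lambda>t x. M * (K t x + (K t x)\<^sup>2))"
proof (rule Lp_of_pointwise_le[OF PP T _ K])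
  show "set_borel_measurable borel (D0 T) (\<lambda>(t,x). M * (K t x + (K t x)\<^sup>2))"
    using K unfolding Lp_def by (intro set_borel_measurable_compose[where F = "\<lambda>k. M * (k + k\<^sup>2)"]) auto
  have "\<bar>M * (k + k\<^sup>2)\<bar>\<^sup>2 \<le> M\<^sup>2 + 3 * M\<^sup>2 * \<bar>k\<bar> ^ 4" for k :: real
  proof -
    have "(k + k\<^sup>2)\<^sup>2 = k\<^sup>2 + 2 * k ^ 3 + k ^ 4" "(k - k\<^sup>2)\<^sup>2 = k\<^sup>2 - 2 * k ^ 3 + k ^ 4"
      "(k\<^sup>2 - 1)\<^sup>2 = k ^ 4 - 2 * k\<^sup>2 + 1" by algebra+
    then have "(k + k\<^sup>2)\<^sup>2 \<le> 1 + 3 * k ^ 4"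
      using zero_le_power2[of "k - k\<^sup>2"] zero_le_power2[of "k\<^sup>2 - 1"] by linarith
    then have "M\<^sup>2 * (k + k\<^sup>2)\<^sup>2 \<le> M\<^sup>2 * (1 + 3 * k ^ 4)" by (rule mult_left_mono) simp
    moreover have "\<bar>M * (k + k\<^sup>2)\<bar>\<^sup>2 = M\<^sup>2 * (k + k\<^sup>2)\<^sup>2" by (simp add: power_mult_distrib)
    ultimately show ?thesis by (simp add: algebra_simps)
  qed
  then show "\<bar>M * (K t x + (K t x)\<^sup>2)\<bar>\<^sup>2 \<le> M\<^sup>2 + 3 * M\<^sup>2 * \<bar>K t x\<bar> ^ 4" for t x .
qed simp_all

theorem proposition5p8:
  fixes T S0 Sig0 A0 Slo Shi TC KY KV Kw psi0 :: real
    and Cpay :: "real \<Rightarrow> real" and C :: "real \<Rightarrow> real \<Rightarrow> real \<Rightarrow> real"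
    and Vpay :: "real \<Rightarrow> real \<Rightarrow> real \<Rightarrow> real" and V :: "real \<Rightarrow> real4 \<Rightarrow> real"
    and \<alpha> \<beta> \<gamma> \<delta> :: "real \<Rightarrow> real \<Rightarrow> real \<Rightarrow> real \<Rightarrow> real"
    and Psi zlo zhi :: real4
    and U :: "real \<Rightarrow> real"
    and PP :: "path measure set" and zetaP :: "path measure \<Rightarrow> real \<Rightarrow> path \<Rightarrow> real4"
    and YY :: "(real \<Rightarrow> path \<Rightarrow> real \<times> real) set"
    and Ypl :: "(real \<Rightarrow> path \<Rightarrow> real \<times> real) \<Rightarrow> path measure \<Rightarrow> real \<Rightarrow> path \<Rightarrow> real"
    and KC K0 w :: "real \<Rightarrow> real4 \<Rightarrow> real"
    and Pf :: "real \<Rightarrow> path measure"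
  assumes setting: "T > 0" "S0 > 0" "Sig0 > 0" "0 < Slo" "Slo < Sig0" "Sig0 < Shi"
    and Psi_pos: "c1 Psi > 0" "c2 Psi > 0" "c3 Psi > 0" "c4 Psi > 0"
    and coeff_borel: "(\<lambda>(t,S,A,M). \<alpha> t S A M) \<in> borel_measurable borel"
      "(\<lambda>(t,S,A,M). \<beta> t S A M) \<in> borel_measurable borel"
      "(\<lambda>(t,S,A,M). \<gamma> t S A M) \<in> borel_measurable borel"
      "(\<lambda>(t,S,A,M). \<delta> t S A M) \<in> borel_measurable borel"
    \<comment> \<open>\<open>\<P> \<subseteq> \<P>\<^sup>0\<close> (the expressible part: probability measures on the path space, progressively
        measurable controls, positivity, \<open>\<xi>\<^sup>P \<ge> 0\<close> and the call-drift constraint)\<close>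
    and models: "\<forall>P\<in>PP. prob_space P \<and> space P = Omega T S0 Sig0 A0 \<and>
         sets P = Fsets T (Omega T S0 Sig0 A0) \<and> prog_meas T (Omega T S0 Sig0 A0) (zetaP P) \<and>
         (AE \<omega> in P. \<forall>t\<in>{0..T}. pS \<omega> t > 0 \<and> pSig \<omega> t > 0) \<and>
         AE_dtP T P (\<lambda>t \<omega>. c4 (zetaP P t \<omega>) \<ge> 0 \<and> bC C t (Xp \<omega> t) (zetaP P t \<omega>) = 0)"
    \<comment> \<open>(A)(a)\<close>
    and A_a: "KY > 0" "\<forall>\<upsilon>\<in>YY. \<forall>P\<in>PP. AE_dtP T P (\<lambda>t \<omega>. Ypl \<upsilon> P t \<omega> > - KY)"
    \<comment> \<open>(A)(b)\<close>
    and A_b_ref: "\<exists>P\<in>PP. AE_dtP T P (\<lambda>t \<omega>. zetaP P t \<omega> = zeta0 (pSig \<omega> t))"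
    and A_b_consts: "c1 zlo < 0" "0 < c1 zhi" "0 < c2 zlo" "c2 zlo < Slo" "Shi < c2 zhi"
      "c3 zlo < 0" "0 < c3 zhi" "c4 zhi > 0"
    and A_b_bounds: "\<forall>P\<in>PP. AE_dtP T P (\<lambda>t \<omega>. zetaP P t \<omega> \<in> Zbox zlo zhi \<and>
                                             Slo \<le> pSig \<omega> t \<and> pSig \<omega> t \<le> Shi)"
    \<comment> \<open>(A)(c)\<close>
    and A_c: "TC \<ge> T" "C122_on ({0<..<TC} \<times> {0<..} \<times> {0<..}) C"
      "continuous_on ({0..TC} \<times> {0..} \<times> {0..}) (\<lambda>(t,S,s). C t S s)"
      "\<forall>s\<in>{Slo..Shi}. \<forall>t\<in>{0<..<TC}. \<forall>S>0. Cdt C t S s + 1/2 * s\<^sup>2 * S\<^sup>2 * CdS (CdS C) t S s = 0"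
      "\<forall>s\<in>{Slo..Shi}. \<forall>S>0. C TC S s = Cpay S"
      "\<forall>t\<in>{0<..<T}. \<forall>S>0. \<forall>s\<in>{Slo..Shi}. CdSig C t S s \<noteq> 0"
      "\<forall>(t,x)\<in>D T Slo Shi. \<bar>CdSig (CdSig C) t (xS x) (xSig x)\<bar> \<le>
          KC t x * (\<bar>CdSig C t (xS x) (xSig x)\<bar> + \<bar>(xS x)\<^sup>2 * CdS (CdS C) t (xS x) (xSig x)\<bar>
                    + \<bar>xS x * CdSig (CdS C) t (xS x) (xSig x)\<bar>)"
      "Lp T PP 2 KC"
    \<comment> \<open>(A)(d)\<close>
    and A_d: "C12212_on (D0 T) V" "continuous_on (D0cl T) (\<lambda>(t,x). V t x)"
      "\<forall>(t,x)\<in>D0 T. Slo \<le> xSig x \<and> xSig x \<le> Shi \<longrightarrow> Lop \<alpha> \<beta> \<gamma> V t x = 0"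
      "\<forall>(t,x)\<in>D0 T. Slo \<le> xSig x \<and> xSig x \<le> Shi \<and> xS x \<ge> xM x \<longrightarrow>
          gam_at \<delta> t x * Vdx 2 V t x + Vdx 3 V t x = 0"
      "\<forall>x. xS x > 0 \<and> xM x > 0 \<and> Slo \<le> xSig x \<and> xSig x \<le> Shi \<longrightarrow> V T x = Vpay (xS x) (xA x) (xM x)"
      "\<forall>(t,x)\<in>D T Slo Shi. \<bar>Vdx 4 V t x\<bar> \<le> KV \<and>
          \<bar>gam_at \<beta> t x * Vdx 2 V t x + (xS x)\<^sup>2 * Gam \<gamma> V t x\<bar> \<le> KV \<and>
          \<bar>xS x * dDel_dSig \<gamma> V t x\<bar> \<le> KV \<and> \<bar>Vdx 4 (Vdx 4 V) t x\<bar> \<le> KV"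
    \<comment> \<open>(A)(e)\<close>
    and A_e: "C12212_on (D0 T) w" "continuous_on (D0cl T) (\<lambda>(t,x). w t x)"
      "\<forall>(t,x)\<in>D0 T. Slo \<le> xSig x \<and> xSig x \<le> Shi \<longrightarrow>
          Lop \<alpha> \<beta> \<gamma> w t x + 1/2 * gtil Psi C \<beta> \<gamma> V t x = 0"
      "\<forall>(t,x)\<in>D0 T. Slo \<le> xSig x \<and> xSig x \<le> Shi \<and> xS x \<ge> xM x \<longrightarrow>
          gam_at \<delta> t x * Vdx 2 w t x + Vdx 3 w t x = 0"
      "\<forall>x. xS x > 0 \<and> xM x > 0 \<and> Slo \<le> xSig x \<and> xSig x \<le> Shi \<longrightarrow> w T x = 0"
      "\<forall>(t,x)\<in>D T Slo Shi. 0 \<le> w t x \<and> w t x \<le> Kw"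
      "Lp T PP 4 (Vdx 4 w)" "Lp T PP 4 (\<lambda>t x. xS x * Del \<gamma> w t x)"
      "Lp T PP 4 (\<lambda>t x. gam_at \<beta> t x * Vdx 2 w t x + (xS x)\<^sup>2 * Gam \<gamma> w t x)"
      "Lp T PP 4 (\<lambda>t x. xS x * dDel_dSig \<gamma> w t x)" "Lp T PP 4 (Vdx 4 (Vdx 4 w))"
    \<comment> \<open>(A)(f)\<close>
    and A_f: "C3 U" "\<forall>y. deriv U y > 0" "\<forall>y. deriv (deriv U) y < 0"
      "\<forall>y1 y2. y1 \<le> y2 \<longrightarrow> - deriv (deriv U) y2 / deriv U y2 \<le> - deriv (deriv U) y1 / deriv U y1"
    \<comment> \<open>(H): delta-vega hedge admissible, candidate asymptotic model family\<close>
    and H_hedge: "(\<lambda>t \<omega>. ups_star C \<gamma> V t (Xp \<omega> t)) \<in> YY"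
    and H_family: "0 < psi0" "psi0 < 1" "Lp T PP 4 K0"
      "\<forall>\<psi>\<in>{0<..<psi0}. Pf \<psi> \<in> PP \<and>
          AE_dtP T (Pf \<psi>) (\<lambda>t \<omega>. norm (zetaP (Pf \<psi>) t \<omega> - zpsi Slo Shi Psi C \<beta> \<gamma> V \<psi> t (Xp \<omega> t))
                                  \<le> K0 t (Xp \<omega> t) * \<psi>\<^sup>2)"
  shows "(\<forall>K. (\<forall>(t,x)\<in>D0 T. 0 \<le> K t x) \<and> Lp T PP 4 K \<longrightarrow>
            (\<exists>K1. (\<forall>(t,x)\<in>D0 T. 0 \<le> K1 t x) \<and> Lp T PP 1 K1 \<and>
               (\<forall>(t,x)\<in>D T Slo Shi. \<forall>z\<in>Z0 C t x \<inter> Zbox zlo zhi. \<forall>\<psi>\<in>{0<..<1}.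
                  norm (z - zeta0 (xSig x)) \<le> K t x * \<psi> \<longrightarrow>
                  H1 Psi \<beta> \<gamma> V \<psi> t x z \<ge> - 1/2 * gtil Psi C \<beta> \<gamma> V t x * \<psi> - K1 t x * \<psi>\<^sup>2)))
       \<and> (\<forall>Kb. (\<forall>(t,x)\<in>D0 T. 0 \<le> Kb t x) \<and> Lp T PP 4 Kb \<longrightarrow>
            (\<exists>K1. (\<forall>(t,x)\<in>D0 T. 0 \<le> K1 t x) \<and> Lp T PP 2 K1 \<and>
               (\<forall>(t,x)\<in>D T Slo Shi. \<forall>z\<in>Zbox zlo zhi. \<forall>\<psi>\<in>{0<..<1}.
                  norm (z - zpsi Slo Shi Psi C \<beta> \<gamma> V \<psi> t x) \<le> Kb t x * \<psi>\<^sup>2 \<longrightarrow>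
                  H1 Psi \<beta> \<gamma> V \<psi> t x z \<le>
                    - 1/2 * gtil Psi C \<beta> \<gamma> V t x * (if Slo < xSig x \<and> xSig x < Shi then 1 else 0) * \<psi>
                    + K1 t x * \<psi>\<^sup>2)))"
proof -
  have P: "positive_weights Psi" using Psi_pos by (simp add: positive_weights_def)
  have PP: "\<forall>P\<in>PP. prob_space P" using models by blast
  have T: "T \<ge> 0" using setting(1) by simp
  define R where "R = wmax Psi / wmin Psi * (2 * (1 + Shi) * \<bar>KV\<bar>)"
  define Ma where "Ma = (2 / Slo + 1) * R"
  define Mb where "Mb = R + 1 / (2 * wmin Psi)"
  have "R \<ge> 0" using wmin_pos[OF P] le_wmax(1)[of Psi] Psi_pos(1) setting by (simp add: R_def)
  then have Ma: "Ma \<ge> 0" and Mb: "Mb \<ge> 0"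
    using setting(4) wmin_pos[OF P] by (simp_all add: Ma_def Mb_def)
  have CS: "CdSig C t (xS x) (xSig x) \<noteq> 0" and sig: "Slo \<le> xSig x"
    and v: "norm (vvec \<beta> \<gamma> V t x) \<le> 2 * (1 + Shi) * \<bar>KV\<bar>" if "(t, x) \<in> D T Slo Shi" for t x
  proof -
    have "0 < t" "t < T" "0 < xS x" "Slo \<le> xSig x" "xSig x \<le> Shi"
      using that by (auto simp: D_def)
    then show "CdSig C t (xS x) (xSig x) \<noteq> 0" "Slo \<le> xSig x"
      using A_c(6) by auto
    show "norm (vvec \<beta> \<gamma> V t x) \<le> 2 * (1 + Shi) * \<bar>KV\<bar>"
      using bspec[OF A_d(6) that] \<open>Slo \<le> xSig x\<close> \<open>xSig x \<le> Shi\<close> setting(4)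
      by (intro norm_vvec_le) auto
  qed
  have lower: "H1 Psi \<beta> \<gamma> V \<psi> t x z \<ge> - 1/2 * gtil Psi C \<beta> \<gamma> V t x * \<psi> - Ma * k\<^sup>2 * \<psi>\<^sup>2"
    if "(t, x) \<in> D T Slo Shi" "z \<in> Z0 C t x" "0 < \<psi>" "norm (z - zeta0 (xSig x)) \<le> k * \<psi>"
    for t x z \<psi> k
    using H1_lower_bound[OF P CS setting(4) sig v] that unfolding Ma_def R_def by blast
  have upper: "H1 Psi \<beta> \<gamma> V \<psi> t x z
      \<le> - 1/2 * gtil Psi C \<beta> \<gamma> V t x * (if Slo < xSig x \<and> xSig x < Shi then 1 else 0) * \<psi>
        + Mb * (k + k\<^sup>2) * \<psi>\<^sup>2"
    if "(t, x) \<in> D T Slo Shi" "0 < \<psi>" "\<psi> < 1"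
      "norm (z - zpsi Slo Shi Psi C \<beta> \<gamma> V \<psi> t x) \<le> k * \<psi>\<^sup>2" for t x z \<psi> k
    using H1_upper_bound[OF P CS v] that unfolding Mb_def R_def by blast
  show ?thesis
    apply (intro conjI allI impI)
    subgoal for K
      apply (intro exI[of _ "\<lambda>t x. Ma * (K t x)\<^sup>2"] conjI)
      subgoal using Ma by auto
      subgoal by (rule Lp_cmult_square[OF PP T _ Ma]) simp
      subgoal by clarify (rule lower; auto)
      done
    subgoal for Kb
      apply (intro exI[of _ "\<lambda>t x. Mb * (Kb t x + (Kb t x)\<^sup>2)"] conjI)
      subgoal using Mb by auto
      subgoal by (rule Lp_cmult_add_square[OF PP T]) simp
      subgoal by clarify (rule upper; auto)
      done
    done
qed

end
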